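(* Let $\Bbbk$ be a field of characteristic $0$, $B=\bigoplus_{s=1}^N\Bbbk e_s$ ($N\ge2$), and let $(A,\{\!\{-,-\}\!\},\Phi)$ be a quasi-Hamiltonian algebra over $B$ with $\Phi=\sum_s\Phi_s$, $\Phi_s\in e_sAe_s$. Let $A^f$ be the fusion algebra obtained by fusing $e_2$ onto $e_1$ with double bracket $\{\!\{-,-\}\!\}^f=\{\!\{-,-\}\!\}_{ind}+\{\!\{-,-\}\!\}_{fus}$, and set $\operatorname{Tr}(\Phi_s)=\epsilon\Phi_s\epsilon$ for $s\ne2$, $\operatorname{Tr}(\Phi_2)=e_{12}\Phi_2e_{21}$. Then for every $s\ne1,2$ and every $a\in A^f$, $$\{\!\{\operatorname{Tr}(\Phi_s),a\}\!\}^f=\tfrac12\big(ae_s\otimes\operatorname{Tr}(\Phi_s)+a\operatorname{Tr}(\Phi_s)\otimes e_s-e_s\otimes\operatorname{Tr}(\Phi_s)a-\operatorname{Tr}(\Phi_s)\otimes e_sa\big),$$ and, setting $\Phi^f_1=\operatorname{Tr}(\Phi_1)\operatorname{Tr}(\Phi_2)$, for every $a\in A^f$, $$\{\!\{\Phi^f_1,a\}\!\}^f=\tfrac12\big(ae_1\otimes\Phi^f_1+a\Phi^f_1\otimes e_1-e_1\otimes\Phi^f_1a-\Phi^f_1\otimes e_1a\big).$$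
   Context: Conventions: $\otimes=\otimes_\Bbbk$; Sweedler notation $d=d'\otimes d''$; outer bimodule structure $b(a_1\otimes a_2)c=ba_1\otimes a_2c$. A $B$-linear double bracket is a $\Bbbk$-bilinear map $A\times A\to A\otimes A$ vanishing when an argument lies in $B$, with $\{\!\{a,b\}\!\}=-\{\!\{b,a\}\!\}''\otimes\{\!\{b,a\}\!\}'$ and $\{\!\{a,bc\}\!\}=\{\!\{a,b\}\!\}c+b\{\!\{a,c\}\!\}$. With $\tau(a_1\otimes a_2\otimes a_3)=a_3\otimes a_1\otimes a_2$, its triple bracket is $\{\!\{a,b,c\}\!\}=\{\!\{a,\{\!\{b,c\}\!\}'\}\!\}\otimes\{\!\{b,c\}\!\}''+\tau\{\!\{b,\{\!\{c,a\}\!\}'\}\!\}\otimes\{\!\{c,a\}\!\}''+\tau^2\{\!\{c,\{\!\{a,b\}\!\}'\}\!\}\otimes\{\!\{a,b\}\!\}''$; it is quasi-Poisson if $\{\!\{a,b,c\}\!\}=\frac14\sum_s(ce_sa\otimes e_sb\otimes e_s-ce_sa\otimes e_s\otimes be_s-ce_s\otimes ae_sb\otimes e_s+ce_s\otimes ae_s\otimes be_s-e_sa\otimes e_sb\otimes e_sc+e_sa\otimes e_s\otimes be_sc+e_s\otimes ae_sb\otimes e_sc-e_s\otimes ae_s\otimes be_sc)$. Quasi-Hamiltonian: quasi-Poisson with invertible $\Phi=\sum_s\Phi_s$, $\Phi_s\in e_sAe_s$, and $\{\!\{\Phi_s,a\}\!\}=\frac12(ae_s\otimes\Phi_s-e_s\otimes\Phi_sa+a\Phi_s\otimes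 e_s-\Phi_s\otimes e_sa)$ for all $a,s$. Fusion: $\mu=1-e_1-e_2$; $\mathrm{Mat}_2(\Bbbk)$ with matrix units $e_{11}=e_1,e_{12},e_{21},e_{22}=e_2$; $\bar A=A*_{\Bbbk e_1\oplus\Bbbk e_2\oplus\Bbbk\mu}(\mathrm{Mat}_2(\Bbbk)\oplus\Bbbk\mu)$; $\epsilon=1-e_2$; $A^f=\epsilon\bar A\epsilon$. Generators of $A^f$: $t\in\epsilon A\epsilon$, $e_{12}u$ ($u\in e_2A\epsilon$), $ve_{21}$ ($v\in\epsilon Ae_2$), $e_{12}we_{21}$ ($w\in e_2Ae_2$), written $e_+\alpha e_-$. $\{\!\{e_+\alpha e_-,f_+\beta f_-\}\!\}_{ind}=f_+\{\!\{\alpha,\beta\}\!\}'e_-\otimes e_+\{\!\{\alpha,\beta\}\!\}''f_-$. $\operatorname{Tr}(E_1),\operatorname{Tr}(E_2)$ are the derivations $A^f\to A^f\otimes A^f$ with $\operatorname{Tr}(E_1)(t)=te_1\otimes e_1-e_1\otimes e_1t$, $\operatorname{Tr}(E_2)(t)=0$; $\operatorname{Tr}(E_1)(e_{12}u)=e_{12}ue_1\otimes e_1$, $\operatorname{Tr}(E_2)(e_{12}u)=-e_1\otimes e_{12}u$; $\operatorname{Tr}(E_1)(ve_{21})=-e_1\otimes e_1ve_{21}$, $\operatorname{Tr}(E_2)(ve_{21})=ve_{21}\otimes e_1$; $\operatorname{Tr}(E_1)(e_{12}we_{21})=0$, $\operatorname{Tr}(E_2)(e_{12}we_{21})=e_{12}we_{21}e_1\otimes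 e_1-e_1\otimes e_1e_{12}we_{21}$; and $\{\!\{a,b\}\!\}_{fus}=-\frac12\operatorname{Tr}(E_2)(b)'\operatorname{Tr}(E_1)(a)''\otimes\operatorname{Tr}(E_1)(a)'\operatorname{Tr}(E_2)(b)''+\frac12\operatorname{Tr}(E_1)(b)'\operatorname{Tr}(E_2)(a)''\otimes\operatorname{Tr}(E_2)(a)'\operatorname{Tr}(E_1)(b)''$. *)

theory Defs
  imports Main
begin

definition kalg :: "('k::field \<Rightarrow> 'a::ring_1 \<Rightarrow> 'a) \<Rightarrow> bool" where
  "kalg sm \<longleftrightarrow> (\<forall>c x y. sm c (x + y) = sm c x + sm c y) \<and> (\<forall>c d x. sm (c + d) x = sm c x + sm d x)
     \<and> (\<forall>c d x. sm (c * d) x = sm c (sm d x)) \<and> (\<forall>x. sm 1 x = x)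
     \<and> (\<forall>c x y. sm c (x * y) = sm c x * y) \<and> (\<forall>c x y. sm c (x * y) = x * sm c y)"

definition bilin_form :: "('k::field \<Rightarrow> 'a::ring_1 \<Rightarrow> 'a) \<Rightarrow> ('a \<Rightarrow> 'a \<Rightarrow> 'k) \<Rightarrow> bool" where
  "bilin_form sm \<phi> \<longleftrightarrow> (\<forall>x x' y. \<phi> (x + x') y = \<phi> x y + \<phi> x' y) \<and> (\<forall>x y y'. \<phi> x (y + y') = \<phi> x y + \<phi> x y')
     \<and> (\<forall>c x y. \<phi> (sm c x) y = c * \<phi> x y) \<and> (\<forall>c x y. \<phi> x (sm c y) = c * \<phi> x y)"

definition trilin_form :: "('k::field \<Rightarrow> 'a::ring_1 \<Rightarrow> 'a) \<Rightarrow> ('a \<Rightarrow> 'a \<Rightarrow> 'a \<Rightarrow> 'k) \<Rightarrow> bool" where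
  "trilin_form sm \<phi> \<longleftrightarrow>
       (\<forall>x x' y z. \<phi> (x + x') y z = \<phi> x y z + \<phi> x' y z)
     \<and> (\<forall>x y y' z. \<phi> x (y + y') z = \<phi> x y z + \<phi> x y' z)
     \<and> (\<forall>x y z z'. \<phi> x y (z + z') = \<phi> x y z + \<phi> x y z')
     \<and> (\<forall>c x y z. \<phi> (sm c x) y z = c * \<phi> x y z) \<and> (\<forall>c x y z. \<phi> x (sm c y) z = c * \<phi> x y z)
     \<and> (\<forall>c x y z. \<phi> x y (sm c z) = c * \<phi> x y z)"

text \<open>An element of A \<otimes> A is represented by a finite list [(x_i,y_i)] meaning \<Sum> x_i \<otimes> y_i.
  Two such lists denote the same tensor iff every bilinear form A \<times> A \<rightarrow> k takes the same
  value on them (over a field the bilinear forms separate the points of A \<otimes> A).\<close>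
definition tens_eq :: "('k::field \<Rightarrow> 'a::ring_1 \<Rightarrow> 'a) \<Rightarrow> ('a \<times> 'a) list \<Rightarrow> ('a \<times> 'a) list \<Rightarrow> bool" where
  "tens_eq sm xs ys \<longleftrightarrow> (\<forall>\<phi>. bilin_form sm \<phi> \<longrightarrow>
      (\<Sum>(x, y)\<leftarrow>xs. \<phi> x y) = (\<Sum>(x, y)\<leftarrow>ys. \<phi> x y))"

definition tens3_eq :: "('k::field \<Rightarrow> 'a::ring_1 \<Rightarrow> 'a) \<Rightarrow> ('a \<times> 'a \<times> 'a) list \<Rightarrow> ('a \<times> 'a \<times> 'a) list \<Rightarrow> bool" where
  "tens3_eq sm xs ys \<longleftrightarrow> (\<forall>\<phi>. trilin_form sm \<phi> \<longrightarrow>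
      (\<Sum>(x, y, z)\<leftarrow>xs. \<phi> x y z) = (\<Sum>(x, y, z)\<leftarrow>ys. \<phi> x y z))"

definition base_ok :: "('k::field \<Rightarrow> 'a::ring_1 \<Rightarrow> 'a) \<Rightarrow> (nat \<Rightarrow> 'a) \<Rightarrow> nat \<Rightarrow> bool" where
  "base_ok sm e N \<longleftrightarrow> kalg sm \<and> (\<forall>s\<in>{1..N}. e s * e s = e s \<and> e s \<noteq> 0)
     \<and> (\<forall>s\<in>{1..N}. \<forall>t\<in>{1..N}. s \<noteq> t \<longrightarrow> e s * e t = 0) \<and> (\<Sum>s\<in>{1..N}. e s) = 1"

definition Bsub :: "('k::field \<Rightarrow> 'a::ring_1 \<Rightarrow> 'a) \<Rightarrow> (nat \<Rightarrow> 'a) \<Rightarrow> nat \<Rightarrow> 'a set" where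
  "Bsub sm e N = {(\<Sum>s\<in>{1..N}. sm (c s) (e s)) | c. True}"

text \<open>B-linear double bracket on A (values in A \<otimes> A, outer bimodule structure).\<close>
definition dbracket :: "('k::field \<Rightarrow> 'a::ring_1 \<Rightarrow> 'a) \<Rightarrow> (nat \<Rightarrow> 'a) \<Rightarrow> nat \<Rightarrow> ('a \<Rightarrow> 'a \<Rightarrow> ('a \<times> 'a) list) \<Rightarrow> bool" where
  "dbracket sm e N br \<longleftrightarrow>
       (\<forall>a a' b. tens_eq sm (br (a + a') b) (br a b @ br a' b))
     \<and> (\<forall>a b b'. tens_eq sm (br a (b + b')) (br a b @ br a b'))
     \<and> (\<forall>c a b. tens_eq sm (br (sm c a) b) (map (\<lambda>(x, y). (sm c x, y)) (br a b)))
     \<and> (\<forall>c a b. tens_eq sm (br a (sm c b)) (map (\<lambda>(x, y). (sm c x, y)) (br a b)))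
     \<and> (\<forall>a b. a \<in> Bsub sm e N \<or> b \<in> Bsub sm e N \<longrightarrow> tens_eq sm (br a b) [])
     \<and> (\<forall>a b. tens_eq sm (br a b) (map (\<lambda>(x, y). (- y, x)) (br b a)))
     \<and> (\<forall>a b c. tens_eq sm (br a (b * c))
            (map (\<lambda>(x, y). (x, y * c)) (br a b) @ map (\<lambda>(x, y). (b * x, y)) (br a c)))"

definition tau3 :: "'a \<times> 'a \<times> 'a \<Rightarrow> 'a \<times> 'a \<times> 'a" where
  "tau3 t = (case t of (x, y, z) \<Rightarrow> (z, x, y))"

definition tripbr :: "('a \<Rightarrow> 'a \<Rightarrow> ('a \<times> 'a) list) \<Rightarrow> 'a \<Rightarrow> 'a \<Rightarrow> 'a \<Rightarrow> ('a \<times> 'a \<times> 'a) list" where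
  "tripbr br a b c =
      concat (map (\<lambda>(x, y). map (\<lambda>(p, q). (p, q, y)) (br a x)) (br b c))
    @ map tau3 (concat (map (\<lambda>(x, y). map (\<lambda>(p, q). (p, q, y)) (br b x)) (br c a)))
    @ map (tau3 \<circ> tau3) (concat (map (\<lambda>(x, y). map (\<lambda>(p, q). (p, q, y)) (br c x)) (br a b)))"

definition qp_rhs :: "('k::field \<Rightarrow> 'a::ring_1 \<Rightarrow> 'a) \<Rightarrow> (nat \<Rightarrow> 'a) \<Rightarrow> nat \<Rightarrow> 'a \<Rightarrow> 'a \<Rightarrow> 'a \<Rightarrow> ('a \<times> 'a \<times> 'a) list" where
  "qp_rhs sm e N a b c = concat (map (\<lambda>s.
     [ (sm (1/4) (c * e s * a), e s * b, e s),
       (sm (-1/4) (c * e s * a), e s, b * e s),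
       (sm (-1/4) (c * e s), a * e s * b, e s),
       (sm (1/4) (c * e s), a * e s, b * e s),
       (sm (-1/4) (e s * a), e s * b, e s * c),
       (sm (1/4) (e s * a), e s, b * e s * c),
       (sm (1/4) (e s), a * e s * b, e s * c),
       (sm (-1/4) (e s), a * e s, b * e s * c) ]) [1..<Suc N])"

definition quasi_poisson :: "('k::field \<Rightarrow> 'a::ring_1 \<Rightarrow> 'a) \<Rightarrow> (nat \<Rightarrow> 'a) \<Rightarrow> nat \<Rightarrow> ('a \<Rightarrow> 'a \<Rightarrow> ('a \<times> 'a) list) \<Rightarrow> bool" where
  "quasi_poisson sm e N br \<longleftrightarrow> dbracket sm e N br \<and>
     (\<forall>a b c. tens3_eq sm (tripbr br a b c) (qp_rhs sm e N a b c))"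

definition quasi_hamiltonian :: "('k::field \<Rightarrow> 'a::ring_1 \<Rightarrow> 'a) \<Rightarrow> (nat \<Rightarrow> 'a) \<Rightarrow> nat \<Rightarrow> ('a \<Rightarrow> 'a \<Rightarrow> ('a \<times> 'a) list) \<Rightarrow> (nat \<Rightarrow> 'a) \<Rightarrow> bool" where
  "quasi_hamiltonian sm e N br \<Phi> \<longleftrightarrow> quasi_poisson sm e N br
     \<and> (\<forall>s\<in>{1..N}. \<Phi> s = e s * \<Phi> s * e s)
     \<and> (\<exists>\<psi>. (\<Sum>s\<in>{1..N}. \<Phi> s) * \<psi> = 1 \<and> \<psi> * (\<Sum>s\<in>{1..N}. \<Phi> s) = 1)
     \<and> (\<forall>s\<in>{1..N}. \<forall>a. tens_eq sm (br (\<Phi> s) a)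
          [ (sm (1/2) (a * e s), \<Phi> s), (sm (-1/2) (e s), \<Phi> s * a),
            (sm (1/2) (a * \<Phi> s), e s), (sm (-1/2) (\<Phi> s), e s * a) ])"

text \<open>Free (noncommutative, unital) k-algebra on the generators 'a + bool: finitely supported
  functions on words. Inl a is the generator [a] for a \<in> A, Inr True is e12, Inr False is e21.\<close>
type_synonym ('k, 'a) fel = "('a + bool) list \<Rightarrow> 'k"

definition fa_car :: "('k::field, 'a) fel set" where
  "fa_car = {f. finite {w. f w \<noteq> 0}}"

definition fa_add :: "('k::field, 'a) fel \<Rightarrow> ('k, 'a) fel \<Rightarrow> ('k, 'a) fel" where
  "fa_add f g = (\<lambda>w. f w + g w)"
definition fa_sub :: "('k::field, 'a) fel \<Rightarrow> ('k, 'a) fel \<Rightarrow> ('k, 'a) fel" where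
  "fa_sub f g = (\<lambda>w. f w - g w)"
definition fa_neg :: "('k::field, 'a) fel \<Rightarrow> ('k, 'a) fel" where
  "fa_neg f = (\<lambda>w. - f w)"
definition fa_sc :: "'k::field \<Rightarrow> ('k, 'a) fel \<Rightarrow> ('k, 'a) fel" where
  "fa_sc c f = (\<lambda>w. c * f w)"
definition fa_zero :: "('k::field, 'a) fel" where
  "fa_zero = (\<lambda>w. 0)"
definition fa_one :: "('k::field, 'a) fel" where
  "fa_one = (\<lambda>w. if w = [] then 1 else 0)"
definition fa_mul :: "('k::field, 'a) fel \<Rightarrow> ('k, 'a) fel \<Rightarrow> ('k, 'a) fel" where
  "fa_mul f g = (\<lambda>w. \<Sum>i\<le>length w. f (take i w) * g (drop i w))"
definition fa_gen :: "'a + bool \<Rightarrow> ('k::field, 'a) fel" where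
  "fa_gen x = (\<lambda>w. if w = [x] then 1 else 0)"

definition G :: "'a \<Rightarrow> ('k::field, 'a) fel" where "G a = fa_gen (Inl a)"
definition E12 :: "('k::field, 'a) fel" where "E12 = fa_gen (Inr True)"
definition E21 :: "('k::field, 'a) fel" where "E21 = fa_gen (Inr False)"

text \<open>Relations presenting Abar = A *_{k e1 + k e2 + k mu} (Mat_2(k) + k mu):
  A embeds as a unital k-algebra, and e12, e21 are the off-diagonal matrix units whose
  diagonal units are e1, e2 of A (so mu = 1 - e1 - e2 is identified automatically).\<close>
definition rels :: "('k::field \<Rightarrow> 'a::ring_1 \<Rightarrow> 'a) \<Rightarrow> (nat \<Rightarrow> 'a) \<Rightarrow> ('k, 'a) fel set" where
  "rels sm e =
      {fa_sub (G (a + b)) (fa_add (G a) (G b)) | a b. True}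
    \<union> {fa_sub (G (sm c a)) (fa_sc c (G a)) | c a. True}
    \<union> {fa_sub (G (a * b)) (fa_mul (G a) (G b)) | a b. True}
    \<union> {fa_sub (G 1) fa_one,
       fa_sub E12 (fa_mul (fa_mul (G (e 1)) E12) (G (e 2))),
       fa_sub E21 (fa_mul (fa_mul (G (e 2)) E21) (G (e 1))),
       fa_sub (fa_mul E12 E21) (G (e 1)),
       fa_sub (fa_mul E21 E12) (G (e 2))}"

inductive_set fa_ideal :: "('k::field, 'a) fel set \<Rightarrow> ('k, 'a) fel set" for R where
  zero: "fa_zero \<in> fa_ideal R"
| gen: "r \<in> R \<Longrightarrow> p \<in> fa_car \<Longrightarrow> q \<in> fa_car \<Longrightarrow> fa_mul (fa_mul p r) q \<in> fa_ideal R"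
| add: "x \<in> fa_ideal R \<Longrightarrow> y \<in> fa_ideal R \<Longrightarrow> fa_add x y \<in> fa_ideal R"

definition Ibar :: "('k::field \<Rightarrow> 'a::ring_1 \<Rightarrow> 'a) \<Rightarrow> (nat \<Rightarrow> 'a) \<Rightarrow> ('k, 'a) fel set" where
  "Ibar sm e = fa_ideal (rels sm e)"

definition bar_eq :: "('k::field \<Rightarrow> 'a::ring_1 \<Rightarrow> 'a) \<Rightarrow> (nat \<Rightarrow> 'a) \<Rightarrow> ('k, 'a) fel \<Rightarrow> ('k, 'a) fel \<Rightarrow> bool" where
  "bar_eq sm e f g \<longleftrightarrow> fa_sub f g \<in> Ibar sm e"

definition bar_form :: "('k::field \<Rightarrow> 'a::ring_1 \<Rightarrow> 'a) \<Rightarrow> (nat \<Rightarrow> 'a) \<Rightarrow> (('k, 'a) fel \<Rightarrow> ('k, 'a) fel \<Rightarrow> 'k) \<Rightarrow> bool" where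
  "bar_form sm e \<phi> \<longleftrightarrow>
       (\<forall>x\<in>fa_car. \<forall>x'\<in>fa_car. \<forall>y\<in>fa_car. \<phi> (fa_add x x') y = \<phi> x y + \<phi> x' y \<and> \<phi> y (fa_add x x') = \<phi> y x + \<phi> y x')
     \<and> (\<forall>c. \<forall>x\<in>fa_car. \<forall>y\<in>fa_car. \<phi> (fa_sc c x) y = c * \<phi> x y \<and> \<phi> y (fa_sc c x) = c * \<phi> y x)
     \<and> (\<forall>x\<in>Ibar sm e. \<forall>y\<in>fa_car. \<phi> x y = 0 \<and> \<phi> y x = 0)"

text \<open>Equality in Abar \<otimes> Abar (which contains A^f \<otimes> A^f).\<close>
definition bar_teq :: "('k::field \<Rightarrow> 'a::ring_1 \<Rightarrow> 'a) \<Rightarrow> (nat \<Rightarrow> 'a) \<Rightarrow>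
     (('k, 'a) fel \<times> ('k, 'a) fel) list \<Rightarrow> (('k, 'a) fel \<times> ('k, 'a) fel) list \<Rightarrow> bool" where
  "bar_teq sm e xs ys \<longleftrightarrow> (\<forall>\<phi>. bar_form sm e \<phi> \<longrightarrow>
      (\<Sum>(x, y)\<leftarrow>xs. \<phi> x y) = (\<Sum>(x, y)\<leftarrow>ys. \<phi> x y))"

definition epsb :: "(nat \<Rightarrow> 'a::ring_1) \<Rightarrow> ('k::field, 'a) fel" where
  "epsb e = fa_sub fa_one (G (e 2))"

definition Af :: "('k::field \<Rightarrow> 'a::ring_1 \<Rightarrow> 'a) \<Rightarrow> (nat \<Rightarrow> 'a) \<Rightarrow> ('k, 'a) fel set" where
  "Af sm e = {f \<in> fa_car. bar_eq sm e f (fa_mul (fa_mul (epsb e) f) (epsb e))}"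

definition fus_dbracket :: "('k::field \<Rightarrow> 'a::ring_1 \<Rightarrow> 'a) \<Rightarrow> (nat \<Rightarrow> 'a) \<Rightarrow>
     (('k, 'a) fel \<Rightarrow> ('k, 'a) fel \<Rightarrow> (('k, 'a) fel \<times> ('k, 'a) fel) list) \<Rightarrow> bool" where
  "fus_dbracket sm e F \<longleftrightarrow> (let A = Af sm e; teq = bar_teq sm e in
       (\<forall>a\<in>A. \<forall>b\<in>A. set (F a b) \<subseteq> A \<times> A)
     \<and> (\<forall>a\<in>A. \<forall>a'\<in>A. \<forall>b\<in>A. \<forall>b'\<in>A. bar_eq sm e a a' \<and> bar_eq sm e b b' \<longrightarrow> teq (F a b) (F a' b'))
     \<and> (\<forall>a\<in>A. \<forall>a'\<in>A. \<forall>b\<in>A. teq (F (fa_add a a') b) (F a b @ F a' b))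
     \<and> (\<forall>a\<in>A. \<forall>b\<in>A. \<forall>b'\<in>A. teq (F a (fa_add b b')) (F a b @ F a b'))
     \<and> (\<forall>c. \<forall>a\<in>A. \<forall>b\<in>A. teq (F (fa_sc c a) b) (map (\<lambda>(x, y). (fa_sc c x, y)) (F a b)))
     \<and> (\<forall>c. \<forall>a\<in>A. \<forall>b\<in>A. teq (F a (fa_sc c b)) (map (\<lambda>(x, y). (fa_sc c x, y)) (F a b)))
     \<and> (\<forall>a\<in>A. \<forall>b\<in>A. teq (F a b) (map (\<lambda>(x, y). (fa_neg y, x)) (F b a)))
     \<and> (\<forall>a\<in>A. \<forall>b\<in>A. \<forall>c\<in>A. teq (F a (fa_mul b c))
          (map (\<lambda>(x, y). (x, fa_mul y c)) (F a b) @ map (\<lambda>(x, y). (fa_mul b x, y)) (F a c))))"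

text \<open>Kinds of generators: t, e12 u, v e21, e12 w e21.\<close>
datatype gkind = KT | KU | KV | KW

definition epsA :: "(nat \<Rightarrow> 'a::ring_1) \<Rightarrow> 'a" where "epsA e = 1 - e 2"

definition gen_ok :: "(nat \<Rightarrow> 'a::ring_1) \<Rightarrow> gkind \<Rightarrow> 'a \<Rightarrow> bool" where
  "gen_ok e k \<alpha> = (case k of
       KT \<Rightarrow> \<alpha> = epsA e * \<alpha> * epsA e
     | KU \<Rightarrow> \<alpha> = e 2 * \<alpha> * epsA e
     | KV \<Rightarrow> \<alpha> = epsA e * \<alpha> * e 2
     | KW \<Rightarrow> \<alpha> = e 2 * \<alpha> * e 2)"

definition eplus :: "gkind \<Rightarrow> ('k::field, 'a) fel" where
  "eplus k = (case k of KT \<Rightarrow> fa_one | KV \<Rightarrow> fa_one | KU \<Rightarrow> E12 | KW \<Rightarrow> E12)"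
definition eminus :: "gkind \<Rightarrow> ('k::field, 'a) fel" where
  "eminus k = (case k of KT \<Rightarrow> fa_one | KU \<Rightarrow> fa_one | KV \<Rightarrow> E21 | KW \<Rightarrow> E21)"

definition gen_el :: "gkind \<Rightarrow> 'a \<Rightarrow> ('k::field, 'a) fel" where
  "gen_el k \<alpha> = fa_mul (fa_mul (eplus k) (G \<alpha>)) (eminus k)"

definition ind_br :: "('a \<Rightarrow> 'a \<Rightarrow> ('a \<times> 'a) list) \<Rightarrow> gkind \<Rightarrow> 'a \<Rightarrow> gkind \<Rightarrow> 'a
     \<Rightarrow> (('k::field, 'a) fel \<times> ('k, 'a) fel) list" where
  "ind_br br k1 \<alpha> k2 \<beta> = map (\<lambda>(x, y).
      (fa_mul (fa_mul (eplus k2) (G x)) (eminus k1), fa_mul (fa_mul (eplus k1) (G y)) (eminus k2))) (br \<alpha> \<beta>)"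

definition TrE1 :: "(nat \<Rightarrow> 'a) \<Rightarrow> gkind \<Rightarrow> 'a \<Rightarrow> (('k::field, 'a) fel \<times> ('k, 'a) fel) list" where
  "TrE1 e k \<alpha> = (let g = gen_el k \<alpha>; E1 = G (e 1) in case k of
       KT \<Rightarrow> [(fa_mul g E1, E1), (fa_neg E1, fa_mul E1 g)]
     | KU \<Rightarrow> [(fa_mul g E1, E1)]
     | KV \<Rightarrow> [(fa_neg E1, fa_mul E1 g)]
     | KW \<Rightarrow> [])"

definition TrE2 :: "(nat \<Rightarrow> 'a) \<Rightarrow> gkind \<Rightarrow> 'a \<Rightarrow> (('k::field, 'a) fel \<times> ('k, 'a) fel) list" where
  "TrE2 e k \<alpha> = (let g = gen_el k \<alpha>; E1 = G (e 1) in case k of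
       KT \<Rightarrow> []
     | KU \<Rightarrow> [(fa_neg E1, g)]
     | KV \<Rightarrow> [(g, E1)]
     | KW \<Rightarrow> [(fa_mul g E1, E1), (fa_neg E1, fa_mul E1 g)])"

definition fus_br :: "(nat \<Rightarrow> 'a) \<Rightarrow> gkind \<Rightarrow> 'a \<Rightarrow> gkind \<Rightarrow> 'a \<Rightarrow> (('k::field, 'a) fel \<times> ('k, 'a) fel) list" where
  "fus_br e k1 \<alpha> k2 \<beta> =
      concat (map (\<lambda>(p, q). map (\<lambda>(r, s). (fa_sc (-1/2) (fa_mul p s), fa_mul r q)) (TrE1 e k1 \<alpha>)) (TrE2 e k2 \<beta>))
    @ concat (map (\<lambda>(p, q). map (\<lambda>(r, s). (fa_sc (1/2) (fa_mul p s), fa_mul r q)) (TrE2 e k1 \<alpha>)) (TrE1 e k2 \<beta>))"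

definition TrPhi :: "(nat \<Rightarrow> 'a::ring_1) \<Rightarrow> (nat \<Rightarrow> 'a) \<Rightarrow> nat \<Rightarrow> ('k::field, 'a) fel" where
  "TrPhi e \<Phi> s = (if s = 2 then fa_mul (fa_mul E12 (G (\<Phi> 2))) E21
                   else fa_mul (fa_mul (epsb e) (G (\<Phi> s))) (epsb e))"

definition Phif1 :: "(nat \<Rightarrow> 'a::ring_1) \<Rightarrow> (nat \<Rightarrow> 'a) \<Rightarrow> ('k::field, 'a) fel" where
  "Phif1 e \<Phi> = fa_mul (TrPhi e \<Phi> 1) (TrPhi e \<Phi> 2)"

definition mom_rhs :: "('k::field, 'a) fel \<Rightarrow> ('k, 'a) fel \<Rightarrow> ('k, 'a) fel \<Rightarrow> (('k, 'a) fel \<times> ('k, 'a) fel) list" where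
  "mom_rhs E P a = [ (fa_sc (1/2) (fa_mul a E), P), (fa_sc (1/2) (fa_mul a P), E),
                     (fa_sc (-1/2) E, fa_mul P a), (fa_sc (-1/2) P, fa_mul E a) ]"

end

theory Submission
  imports Defs
begin

text \<open>Both identities compare two maps \<open>A\<^sup>f \<rightarrow> Abar \<otimes> Abar\<close>: \<open>a \<mapsto> {{P, a}}\<^sup>f\<close> and
  \<open>a \<mapsto> 1/2 (a E \<otimes> P + a P \<otimes> E - E \<otimes> P a - P \<otimes> E a)\<close>. Both are derivations for the outer
  bimodule structure and respect the relations of \<open>Abar\<close>, and \<open>A\<^sup>f\<close> is spanned, modulo these
  relations, by products of the generators \<open>t, e12 u, v e21, e12 w e21\<close>; so it suffices to compare
  them on generators, where the fused bracket is the induced bracket plus the fusion term.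
  For \<open>s \<ge> 3\<close> the element \<open>Phi s\<close> is orthogonal to \<open>e 1\<close> and \<open>e 2\<close>, its fusion terms vanish and
  the quasi-Hamiltonian property of \<open>Phi s\<close> gives the identity. For
  \<open>Phi\<^sup>f 1 = Tr(Phi 1) Tr(Phi 2)\<close>, skew-symmetry and the Leibniz rule reduce the bracket to those
  of the two factors, whose fusion terms supply exactly the missing cross terms.
  Tensors are compared through all bilinear forms on \<open>Abar\<close>, and equalities in \<open>Abar\<close> are
  decided by a normal form for words in \<open>A\<close>, \<open>e12\<close> and \<open>e21\<close>.\<close>

section \<open>Arithmetic in the free algebra\<close>

lemma fa_mul_Nil: "fa_mul f g [] = f [] * g []"
  by (simp add: fa_mul_def)

lemma fa_mul_Cons: "fa_mul f g (a # w) = f [] * g (a # w) + fa_mul (\<lambda>u. f (a # u)) g w"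
  unfolding fa_mul_def by (simp only: length_Cons sum.atMost_Suc_shift) simp

lemma fa_mul_assoc: "fa_mul (fa_mul f g) h = fa_mul f (fa_mul g h)"
proof
  have add: "fa_mul (\<lambda>u. p u + q u) h w = fa_mul p h w + fa_mul q h w" for p q h w
    unfolding fa_mul_def by (simp add: sum.distrib distrib_right)
  have scale: "fa_mul (\<lambda>u. c * p u) h w = c * fa_mul p h w" for c p h w
    unfolding fa_mul_def by (simp add: sum_distrib_left mult.assoc)
  show "fa_mul (fa_mul f g) h w = fa_mul f (fa_mul g h) w" for w
  proof (induction w arbitrary: f)
    case Nil
    then show ?case by (simp add: fa_mul_Nil mult.assoc)
  next
    case (Cons a w)
    have "(\<lambda>u. fa_mul f g (a # u)) = (\<lambda>u. f [] * g (a # u) + fa_mul (\<lambda>u. f (a # u)) g u)"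
      by (simp add: fa_mul_Cons)
    then show ?case
      by (simp add: fa_mul_Cons add scale Cons.IH fa_mul_Nil distrib_left mult.assoc)
  qed
qed

lemma fa_mul_one_left: "fa_mul fa_one f = f"
proof
  show "fa_mul fa_one f w = f w" for w
    by (cases w) (simp_all add: fa_mul_Cons fa_mul_Nil fa_one_def, simp add: fa_mul_def)
qed

lemma fa_mul_one_right: "fa_mul f fa_one = f"
proof
  show "fa_mul f fa_one w = f w" for w
    by (induction w arbitrary: f) (simp_all add: fa_mul_Cons fa_mul_Nil fa_one_def)
qed

lemma fa_distrib_right: "fa_mul (fa_add f g) h = fa_add (fa_mul f h) (fa_mul g h)"
  unfolding fa_mul_def fa_add_def by (simp add: sum.distrib distrib_right)

lemma fa_distrib_left: "fa_mul h (fa_add f g) = fa_add (fa_mul h f) (fa_mul h g)"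
  unfolding fa_mul_def fa_add_def by (simp add: sum.distrib distrib_left)

lemma fa_mul_sc_left: "fa_mul (fa_sc c f) g = fa_sc c (fa_mul f g)"
  unfolding fa_mul_def fa_sc_def by (simp add: sum_distrib_left mult.assoc)

lemma fa_mul_sc_right: "fa_mul f (fa_sc c g) = fa_sc c (fa_mul f g)"
  unfolding fa_mul_def fa_sc_def by (simp add: sum_distrib_left mult.left_commute)

lemma fa_mul_zero_left: "fa_mul fa_zero f = fa_zero"
  unfolding fa_mul_def fa_zero_def by simp

lemma fa_mul_zero_right: "fa_mul f fa_zero = fa_zero"
  unfolding fa_mul_def fa_zero_def by simp

lemma fa_neg_eq_sc: "fa_neg f = fa_sc (-1) f"
  unfolding fa_neg_def fa_sc_def by simp

lemma fa_sub_eq_add_sc: "fa_sub f g = fa_add f (fa_sc (-1) g)"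
  unfolding fa_sub_def fa_sc_def fa_add_def by simp

lemma fa_sc_sc: "fa_sc c (fa_sc d f) = fa_sc (c * d) f"
  unfolding fa_sc_def by (simp add: mult.assoc)

lemma fa_sc_add: "fa_sc c (fa_add f g) = fa_add (fa_sc c f) (fa_sc c g)"
  unfolding fa_sc_def fa_add_def by (simp add: distrib_left)

lemma fa_sc_0: "fa_sc 0 f = fa_zero"
  unfolding fa_sc_def fa_zero_def by simp

lemma fa_sub_distrib_right: "fa_mul (fa_sub f g) h = fa_sub (fa_mul f h) (fa_mul g h)"
  by (simp add: fa_sub_eq_add_sc fa_distrib_right fa_mul_sc_left)

lemma fa_sub_distrib_left: "fa_mul h (fa_sub f g) = fa_sub (fa_mul h f) (fa_mul h g)"
  by (simp add: fa_sub_eq_add_sc fa_distrib_left fa_mul_sc_right)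

lemma fa_car_iff: "f \<in> fa_car \<longleftrightarrow> finite {w. f w \<noteq> 0}"
  by (simp add: fa_car_def)

lemma fa_car_add [simp]: "f \<in> fa_car \<Longrightarrow> g \<in> fa_car \<Longrightarrow> fa_add f g \<in> fa_car"
  unfolding fa_car_iff fa_add_def
  by (rule finite_subset[of _ "{w. f w \<noteq> 0} \<union> {w. g w \<noteq> 0}"]) auto

lemma fa_car_sc [simp]: "f \<in> fa_car \<Longrightarrow> fa_sc c f \<in> fa_car"
  unfolding fa_car_iff fa_sc_def
  by (rule finite_subset[of _ "{w. f w \<noteq> 0}"]) auto

lemma fa_car_neg [simp]: "f \<in> fa_car \<Longrightarrow> fa_neg f \<in> fa_car"
  by (simp add: fa_neg_eq_sc)

lemma fa_car_sub [simp]: "f \<in> fa_car \<Longrightarrow> g \<in> fa_car \<Longrightarrow> fa_sub f g \<in> fa_car"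
  by (simp add: fa_sub_eq_add_sc)

lemma fa_car_zero [simp]: "fa_zero \<in> fa_car"
  unfolding fa_car_iff fa_zero_def by simp

lemma fa_car_one [simp]: "fa_one \<in> fa_car"
  unfolding fa_car_iff fa_one_def by simp

lemma fa_car_gen [simp]: "fa_gen x \<in> fa_car"
  unfolding fa_car_iff fa_gen_def by simp

lemma fa_car_G [simp]: "G a \<in> fa_car"
  and fa_car_E12 [simp]: "E12 \<in> fa_car"
  and fa_car_E21 [simp]: "E21 \<in> fa_car"
  by (simp_all add: G_def E12_def E21_def)

lemma fa_car_mul [simp]:
  assumes "f \<in> fa_car" "g \<in> fa_car"
  shows "fa_mul f g \<in> fa_car"
proof -
  have "{w. fa_mul f g w \<noteq> 0} \<subseteq> (\<lambda>(u, v). u @ v) ` ({w. f w \<noteq> 0} \<times> {w. g w \<noteq> 0})"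
  proof
    fix w assume "w \<in> {w. fa_mul f g w \<noteq> 0}"
    then obtain i where "f (take i w) * g (drop i w) \<noteq> 0"
      unfolding fa_mul_def by (auto elim: sum.not_neutral_contains_not_neutral)
    then show "w \<in> (\<lambda>(u, v). u @ v) ` ({w. f w \<noteq> 0} \<times> {w. g w \<noteq> 0})"
      by (auto intro!: image_eqI[of _ _ "(take i w, drop i w)"])
  qed
  with assms show ?thesis
    unfolding fa_car_iff by (meson finite_SigmaI finite_imageI finite_subset)
qed

definition fa_word :: "('a + bool) list \<Rightarrow> ('k::field, 'a) fel" where
  "fa_word w = (\<lambda>u. if u = w then 1 else 0)"

lemma fa_word_Nil: "fa_word [] = fa_one"
  by (simp add: fa_word_def fa_one_def)

lemma fa_word_Cons: "fa_word (x # w) = fa_mul (fa_gen x) (fa_word w)"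
proof
  fix u
  show "fa_word (x # w) u = fa_mul (fa_gen x) (fa_word w) u"
  proof (cases u)
    case Nil
    then show ?thesis by (simp add: fa_word_def fa_mul_Nil fa_gen_def)
  next
    case (Cons a v)
    have tail: "(\<lambda>u. fa_gen x (a # u)) = (if a = x then fa_one else fa_zero)"
      by (auto simp: fa_gen_def fa_one_def fa_zero_def)
    have rest: "fa_mul (\<lambda>u. fa_gen x (a # u)) (fa_word w) v = (if a = x \<and> v = w then 1 else 0)"
      unfolding tail
      by (cases "a = x") (simp_all add: fa_mul_one_left fa_mul_zero_left, simp_all add: fa_zero_def fa_word_def)
    have head: "(fa_gen x :: ('k::field, 'a) fel) [] = 0"
      by (simp add: fa_gen_def)
    show ?thesis
      unfolding Cons fa_mul_Cons head mult_zero_left add_0_left rest by (simp add: fa_word_def)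
  qed
qed

lemma fa_car_word [simp]: "fa_word w \<in> fa_car"
  unfolding fa_car_iff fa_word_def by simp

section \<open>The quotient \<open>Abar\<close>\<close>

lemma Ibar_carrier: "x \<in> Ibar sm e \<Longrightarrow> x \<in> fa_car"
  unfolding Ibar_def by (induction rule: fa_ideal.induct) (auto simp: rels_def)

lemma Ibar_zero [simp]: "fa_zero \<in> Ibar sm e"
  unfolding Ibar_def by (rule fa_ideal.zero)

lemma Ibar_add: "x \<in> Ibar sm e \<Longrightarrow> y \<in> Ibar sm e \<Longrightarrow> fa_add x y \<in> Ibar sm e"
  unfolding Ibar_def by (rule fa_ideal.add)

lemma Ibar_rels: "r \<in> rels sm e \<Longrightarrow> r \<in> Ibar sm e"
  unfolding Ibar_def using fa_ideal.gen[of r "rels sm e" fa_one fa_one]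
  by (auto simp: fa_mul_one_left fa_mul_one_right rels_def)

lemma Ibar_mul_left:
  assumes "p \<in> fa_car" "x \<in> Ibar sm e"
  shows "fa_mul p x \<in> Ibar sm e"
  using assms(2) unfolding Ibar_def
proof (induction rule: fa_ideal.induct)
  case zero
  then show ?case by (simp add: fa_mul_zero_right fa_ideal.zero)
next
  case (gen r p' q)
  then show ?case
    using fa_ideal.gen[of r "rels sm e" "fa_mul p p'" q] assms(1) by (simp add: fa_mul_assoc)
next
  case (add x y)
  then show ?case by (simp add: fa_distrib_left fa_ideal.add)
qed

lemma Ibar_mul_right:
  assumes "q \<in> fa_car" "x \<in> Ibar sm e"
  shows "fa_mul x q \<in> Ibar sm e"
  using assms(2) unfolding Ibar_def
proof (induction rule: fa_ideal.induct)
  case zero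
  then show ?case by (simp add: fa_mul_zero_left fa_ideal.zero)
next
  case (gen r p q')
  then show ?case
    using fa_ideal.gen[of r "rels sm e" p "fa_mul q' q"] assms(1) by (simp add: fa_mul_assoc)
next
  case (add x y)
  then show ?case by (simp add: fa_distrib_right fa_ideal.add)
qed

lemma Ibar_sc: "x \<in> Ibar sm e \<Longrightarrow> fa_sc c x \<in> Ibar sm e"
  using Ibar_mul_left[of "fa_sc c fa_one" x sm e] by (simp add: fa_mul_sc_left fa_mul_one_left)

lemma bar_eq_refl [simp]: "bar_eq sm e x x"
  unfolding bar_eq_def fa_sub_def by (simp add: fa_zero_def[symmetric])

lemma bar_eq_sym: "bar_eq sm e x y \<Longrightarrow> bar_eq sm e y x"
  unfolding bar_eq_def by (drule Ibar_sc[where c = "-1"]) (simp add: fa_sub_def fa_sc_def)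

lemma bar_eq_trans [trans]: "bar_eq sm e x y \<Longrightarrow> bar_eq sm e y z \<Longrightarrow> bar_eq sm e x z"
  unfolding bar_eq_def by (drule (1) Ibar_add) (simp add: fa_sub_def fa_add_def)

lemma bar_eq_add:
  "bar_eq sm e x x' \<Longrightarrow> bar_eq sm e y y' \<Longrightarrow> bar_eq sm e (fa_add x y) (fa_add x' y')"
  unfolding bar_eq_def by (drule (1) Ibar_add) (simp add: fa_sub_def fa_add_def algebra_simps)

lemma bar_eq_sc: "bar_eq sm e x x' \<Longrightarrow> bar_eq sm e (fa_sc c x) (fa_sc c x')"
  unfolding bar_eq_def by (drule Ibar_sc[where c = c]) (simp add: fa_sub_def fa_sc_def algebra_simps)

lemma bar_eq_mul:
  assumes "bar_eq sm e x x'" "bar_eq sm e y y'" "x' \<in> fa_car" "y \<in> fa_car"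
  shows "bar_eq sm e (fa_mul x y) (fa_mul x' y')"
proof -
  have "fa_sub (fa_mul x y) (fa_mul x' y') = fa_add (fa_mul (fa_sub x x') y) (fa_mul x' (fa_sub y y'))"
    by (simp add: fa_sub_distrib_left fa_sub_distrib_right) (simp add: fa_sub_def fa_add_def)
  with assms show ?thesis
    unfolding bar_eq_def by (simp add: Ibar_add Ibar_mul_left Ibar_mul_right)
qed

lemma bar_eq_sandwich:
  assumes "bar_eq sm e x x'" "x \<in> fa_car" "x' \<in> fa_car" "p \<in> fa_car" "q \<in> fa_car"
  shows "bar_eq sm e (fa_mul (fa_mul p x) q) (fa_mul (fa_mul p x') q)"
  by (rule bar_eq_mul[OF bar_eq_mul[OF bar_eq_refl assms(1)] bar_eq_refl]) (simp_all add: assms)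

lemma bar_eq_rel: "fa_sub x y \<in> rels sm e \<Longrightarrow> bar_eq sm e x y"
  unfolding bar_eq_def by (rule Ibar_rels)

lemma bar_eq_G_mult: "bar_eq sm e (fa_mul (G a) (G b)) (G (a * b))"
  by (rule bar_eq_sym, rule bar_eq_rel) (auto simp: rels_def)

lemma bar_eq_G_one: "bar_eq sm e (G 1) fa_one"
  and bar_eq_G_add: "bar_eq sm e (G (a + b)) (fa_add (G a) (G b))"
  and bar_eq_G_scale: "bar_eq sm e (G (sm c a)) (fa_sc c (G a))"
  and bar_eq_E12: "bar_eq sm e E12 (fa_mul (fa_mul (G (e 1)) E12) (G (e 2)))"
  and bar_eq_E21: "bar_eq sm e E21 (fa_mul (fa_mul (G (e 2)) E21) (G (e 1)))"
  and bar_eq_E12_E21: "bar_eq sm e (fa_mul E12 E21) (G (e 1))"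
  and bar_eq_E21_E12: "bar_eq sm e (fa_mul E21 E12) (G (e 2))"
  by (rule bar_eq_rel, unfold rels_def, blast)+

lemma bar_eq_G_zero: "bar_eq sm e (G 0) fa_zero"
proof -
  have "fa_sub (G 0) (fa_add (G 0) (G 0)) \<in> Ibar sm e"
    using bar_eq_G_add[of sm e 0 0] by (simp add: bar_eq_def)
  then have "fa_sc (-1) (fa_sub (G 0) (fa_add (G 0) (G 0))) \<in> Ibar sm e"
    by (rule Ibar_sc)
  moreover have "fa_sc (-1) (fa_sub (G 0) (fa_add (G 0) (G 0))) = fa_sub (G 0) fa_zero"
    by (simp add: fa_sc_def fa_sub_def fa_add_def fa_zero_def)
  ultimately show ?thesis
    unfolding bar_eq_def by metis
qed

lemma bar_eq_G_diff: "bar_eq sm e (G (a - b)) (fa_sub (G a) (G b))"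
proof -
  have "bar_eq sm e (fa_add (G (a - b)) (G b)) (G a)"
    using bar_eq_sym[OF bar_eq_G_add[of sm e "a - b" b]] by simp
  then show ?thesis
    unfolding bar_eq_def by (simp add: fa_sub_def fa_add_def algebra_simps)
qed

section \<open>Bilinear forms on \<open>Abar\<close>\<close>

context
  fixes sm :: "'k::field \<Rightarrow> 'a::ring_1 \<Rightarrow> 'a" and e :: "nat \<Rightarrow> 'a"
    and \<phi> :: "('k, 'a) fel \<Rightarrow> ('k, 'a) fel \<Rightarrow> 'k"
  assumes bf: "bar_form sm e \<phi>"
begin

lemma bar_form_add_left:
  "x \<in> fa_car \<Longrightarrow> x' \<in> fa_car \<Longrightarrow> y \<in> fa_car \<Longrightarrow> \<phi> (fa_add x x') y = \<phi> x y + \<phi> x' y"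
  and bar_form_add_right:
  "x \<in> fa_car \<Longrightarrow> x' \<in> fa_car \<Longrightarrow> y \<in> fa_car \<Longrightarrow> \<phi> y (fa_add x x') = \<phi> y x + \<phi> y x'"
  and bar_form_sc_left: "x \<in> fa_car \<Longrightarrow> y \<in> fa_car \<Longrightarrow> \<phi> (fa_sc c x) y = c * \<phi> x y"
  and bar_form_sc_right: "x \<in> fa_car \<Longrightarrow> y \<in> fa_car \<Longrightarrow> \<phi> y (fa_sc c x) = c * \<phi> y x"
  and bar_form_Ibar_left: "x \<in> Ibar sm e \<Longrightarrow> y \<in> fa_car \<Longrightarrow> \<phi> x y = 0"
  and bar_form_Ibar_right: "x \<in> Ibar sm e \<Longrightarrow> y \<in> fa_car \<Longrightarrow> \<phi> y x = 0"
  using bf unfolding bar_form_def by blast+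

lemma bar_form_cong_left:
  assumes "bar_eq sm e x x'" "x \<in> fa_car" "x' \<in> fa_car" "y \<in> fa_car"
  shows "\<phi> x y = \<phi> x' y"
proof -
  have "x = fa_add x' (fa_sub x x')"
    by (simp add: fa_sub_def fa_add_def)
  then have "\<phi> x y = \<phi> x' y + \<phi> (fa_sub x x') y"
    using assms by (metis bar_form_add_left fa_car_sub)
  then show ?thesis
    using assms bar_form_Ibar_left unfolding bar_eq_def by fastforce
qed

lemma bar_form_cong_right:
  assumes "bar_eq sm e x x'" "x \<in> fa_car" "x' \<in> fa_car" "y \<in> fa_car"
  shows "\<phi> y x = \<phi> y x'"
proof -
  have "x = fa_add x' (fa_sub x x')"
    by (simp add: fa_sub_def fa_add_def)
  then have "\<phi> y x = \<phi> y x' + \<phi> y (fa_sub x x')"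
    using assms by (metis bar_form_add_right fa_car_sub)
  then show ?thesis
    using assms bar_form_Ibar_right unfolding bar_eq_def by fastforce
qed

end

definition bar_linear :: "('k::field \<Rightarrow> 'a::ring_1 \<Rightarrow> 'a) \<Rightarrow> (nat \<Rightarrow> 'a) \<Rightarrow> (('k, 'a) fel \<Rightarrow> ('k, 'a) fel) \<Rightarrow> bool" where
  "bar_linear sm e L \<longleftrightarrow> (\<forall>x\<in>fa_car. L x \<in> fa_car)
     \<and> (\<forall>x\<in>fa_car. \<forall>y\<in>fa_car. L (fa_add x y) = fa_add (L x) (L y))
     \<and> (\<forall>c. \<forall>x\<in>fa_car. L (fa_sc c x) = fa_sc c (L x)) \<and> (\<forall>x\<in>Ibar sm e. L x \<in> Ibar sm e)"

lemma bar_linear_id: "bar_linear sm e (\<lambda>x. x)"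
  unfolding bar_linear_def by simp

lemma bar_linear_mul_left: "p \<in> fa_car \<Longrightarrow> bar_linear sm e (\<lambda>x. fa_mul p x)"
  unfolding bar_linear_def by (simp add: fa_distrib_left fa_mul_sc_right Ibar_mul_left)

lemma bar_linear_mul_right: "p \<in> fa_car \<Longrightarrow> bar_linear sm e (\<lambda>x. fa_mul x p)"
  unfolding bar_linear_def by (simp add: fa_distrib_right fa_mul_sc_left Ibar_mul_right)

lemma bar_linear_sc: "bar_linear sm e (\<lambda>x. fa_sc c x)"
  unfolding bar_linear_def by (simp add: fa_sc_add fa_sc_sc Ibar_sc mult.commute)

lemma bar_linear_neg: "bar_linear sm e (\<lambda>x. fa_neg x)"
  using bar_linear_sc[of sm e "-1"] by (simp add: fa_neg_eq_sc)

lemma bar_linear_comp: "bar_linear sm e L \<Longrightarrow> bar_linear sm e L' \<Longrightarrow> bar_linear sm e (\<lambda>x. L (L' x))"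
  unfolding bar_linear_def by simp

lemma bar_form_compose:
  "bar_form sm e \<phi> \<Longrightarrow> bar_linear sm e L \<Longrightarrow> bar_linear sm e R \<Longrightarrow> bar_form sm e (\<lambda>x y. \<phi> (L x) (R y))"
  unfolding bar_form_def bar_linear_def by (simp add: Ibar_carrier)

lemma bar_form_swap: "bar_form sm e \<phi> \<Longrightarrow> bar_form sm e (\<lambda>x y. \<phi> y x)"
  unfolding bar_form_def by simp

lemma bar_form_skew: "bar_form sm e \<phi> \<Longrightarrow> bar_form sm e (\<lambda>x y. \<phi> (fa_neg y) x)"
  using bar_form_swap[OF bar_form_compose[OF _ bar_linear_neg bar_linear_id]] by blast

section \<open>Words and a normal form for \<open>Abar\<close>\<close>

text \<open>The idempotent \<open>e i\<close> gets a letter of its own, distinct from \<open>Elt (e i)\<close>, so that the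
  rewriting below can recognise it.\<close>

datatype 'a letter = Elt 'a | U12 | U21 | Idem nat

fun letter_val :: "(nat \<Rightarrow> 'a) \<Rightarrow> 'a letter \<Rightarrow> ('k::field, 'a) fel" where
  "letter_val e (Elt a) = G a"
| "letter_val e U12 = E12"
| "letter_val e U21 = E21"
| "letter_val e (Idem i) = G (e i)"

fun word_val :: "(nat \<Rightarrow> 'a) \<Rightarrow> 'a letter list \<Rightarrow> ('k::field, 'a) fel" where
  "word_val e [] = fa_one"
| "word_val e (l # ls) = fa_mul (letter_val e l) (word_val e ls)"

fun word_val_opt :: "(nat \<Rightarrow> 'a) \<Rightarrow> 'a letter list option \<Rightarrow> ('k::field, 'a) fel" where
  "word_val_opt e None = fa_zero"
| "word_val_opt e (Some w) = word_val e w"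

lemma fa_car_letter_val [simp]: "letter_val e l \<in> fa_car"
  by (cases l) simp_all

lemma fa_car_word_val [simp]: "word_val e w \<in> fa_car"
  by (induction w) simp_all

lemma fa_car_word_val_opt [simp]: "word_val_opt e w \<in> fa_car"
  by (cases w) simp_all

lemma word_val_append: "word_val e (xs @ ys) = fa_mul (word_val e xs) (word_val e ys)"
  by (induction xs) (simp_all add: fa_mul_one_left fa_mul_assoc)

lemma word_val_letters:
  "G a = word_val e [Elt a]" "E12 = word_val e [U12]" "E21 = word_val e [U21]"
  "fa_one = word_val e []" "G (e i) = word_val e [Idem i]"
  by (simp_all add: fa_mul_one_right)

lemma word_val_context:
  assumes "bar_eq sm e (word_val e u) (word_val_opt e v)"
  shows "bar_eq sm e (word_val e (xs @ u @ ys)) (word_val_opt e (map_option (\<lambda>v. xs @ v @ ys) v))"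
proof -
  have "bar_eq sm e (fa_mul (word_val e xs) (fa_mul (word_val e u) (word_val e ys)))
                    (fa_mul (word_val e xs) (fa_mul (word_val_opt e v) (word_val e ys)))"
    by (rule bar_eq_mul[OF bar_eq_refl bar_eq_mul[OF assms bar_eq_refl]]) simp_all
  then show ?thesis
    by (cases v) (simp_all add: word_val_append fa_mul_zero_left fa_mul_zero_right)
qed

lemma word_val_context_Some:
  "bar_eq sm e (word_val e u) (word_val e v) \<Longrightarrow>
   bar_eq sm e (word_val e (xs @ u @ ys)) (word_val e (xs @ v @ ys))"
  using word_val_context[of sm e u "Some v" xs ys] by simp

lemma word_val_context_prefix:
  "bar_eq sm e (word_val e u) (word_val_opt e v) \<Longrightarrow>
   bar_eq sm e (word_val e (u @ r)) (word_val_opt e (map_option (\<lambda>v. v @ r) v))"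
  using word_val_context[where xs = "[]" and ys = r] by simp

lemma word_Elt_mult: "bar_eq sm e (word_val e [Elt a, Elt b]) (word_val e [Elt (a * b)])"
  and word_Elt_one: "bar_eq sm e (word_val e [Elt 1]) (word_val e [])"
  and word_Elt_zero: "bar_eq sm e (word_val e [Elt 0]) (word_val_opt e None)"
  and word_U12: "bar_eq sm e (word_val e [U12]) (word_val e [Elt (e 1), U12, Elt (e 2)])"
  and word_U21: "bar_eq sm e (word_val e [U21]) (word_val e [Elt (e 2), U21, Elt (e 1)])"
  and word_U12_U21: "bar_eq sm e (word_val e [U12, U21]) (word_val e [Elt (e 1)])"
  and word_U21_U12: "bar_eq sm e (word_val e [U21, U12]) (word_val e [Elt (e 2)])"
  using bar_eq_G_mult bar_eq_G_one bar_eq_G_zero bar_eq_E12 bar_eq_E21 bar_eq_E12_E21 bar_eq_E21_E12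
  by (simp_all add: fa_mul_one_right fa_mul_assoc)

lemma word_zero_inside: "bar_eq sm e (word_val e (xs @ Elt 0 # ys)) fa_zero"
  using word_val_context[OF word_Elt_zero, of sm e xs ys] by simp

lemma word_U12_Elt: "bar_eq sm e (word_val e [U12, Elt c]) (word_val e [Elt (e 1), U12, Elt (e 2 * c)])"
proof -
  have "bar_eq sm e (word_val e [U12, Elt c]) (word_val e [Elt (e 1), U12, Elt (e 2), Elt c])"
    using word_val_context_Some[OF word_U12, where xs = "[]" and ys = "[Elt c]"] by simp
  also have "bar_eq sm e \<dots> (word_val e [Elt (e 1), U12, Elt (e 2 * c)])"
    using word_val_context_Some[OF word_Elt_mult, where xs = "[Elt (e 1), U12]" and ys = "[]"] by simp
  finally show ?thesis .
qed

lemma word_Elt_U12: "bar_eq sm e (word_val e [Elt c, U12]) (word_val e [Elt (c * e 1), U12, Elt (e 2)])"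
proof -
  have "bar_eq sm e (word_val e [Elt c, U12]) (word_val e [Elt c, Elt (e 1), U12, Elt (e 2)])"
    using word_val_context_Some[OF word_U12, where xs = "[Elt c]" and ys = "[]"] by simp
  also have "bar_eq sm e \<dots> (word_val e [Elt (c * e 1), U12, Elt (e 2)])"
    using word_val_context_Some[OF word_Elt_mult, where xs = "[]" and ys = "[U12, Elt (e 2)]"] by simp
  finally show ?thesis .
qed

lemma word_U21_Elt: "bar_eq sm e (word_val e [U21, Elt c]) (word_val e [Elt (e 2), U21, Elt (e 1 * c)])"
proof -
  have "bar_eq sm e (word_val e [U21, Elt c]) (word_val e [Elt (e 2), U21, Elt (e 1), Elt c])"
    using word_val_context_Some[OF word_U21, where xs = "[]" and ys = "[Elt c]"] by simp
  also have "bar_eq sm e \<dots> (word_val e [Elt (e 2), U21, Elt (e 1 * c)])"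
    using word_val_context_Some[OF word_Elt_mult, where xs = "[Elt (e 2), U21]" and ys = "[]"] by simp
  finally show ?thesis .
qed

lemma word_Elt_U21: "bar_eq sm e (word_val e [Elt c, U21]) (word_val e [Elt (c * e 2), U21, Elt (e 1)])"
proof -
  have "bar_eq sm e (word_val e [Elt c, U21]) (word_val e [Elt c, Elt (e 2), U21, Elt (e 1)])"
    using word_val_context_Some[OF word_U21, where xs = "[Elt c]" and ys = "[]"] by simp
  also have "bar_eq sm e \<dots> (word_val e [Elt (c * e 2), U21, Elt (e 1)])"
    using word_val_context_Some[OF word_Elt_mult, where xs = "[]" and ys = "[U21, Elt (e 1)]"] by simp
  finally show ?thesis .
qed

lemma word_U12_U12:
  assumes "e 2 * e 1 = 0"
  shows "bar_eq sm e (word_val e [U12, U12]) (word_val_opt e None)"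
proof -
  have "bar_eq sm e (word_val e [U12, U12]) (word_val e [U12, Elt (e 1), U12, Elt (e 2)])"
    using word_val_context_Some[OF word_U12, of sm e "[U12]" "[]"] by (simp only: append.simps)
  also have "bar_eq sm e \<dots> (word_val e [Elt (e 1), U12, Elt (e 2 * e 1), U12, Elt (e 2)])"
    using word_val_context_Some[OF word_U12_Elt[of sm e "e 1"], of "[]" "[U12, Elt (e 2)]"]
    by (simp only: append.simps)
  also have "bar_eq sm e \<dots> (word_val_opt e None)"
    using assms word_zero_inside[of sm e "[Elt (e 1), U12]" "[U12, Elt (e 2)]"] by simp
  finally show ?thesis .
qed

lemma word_U21_U21:
  assumes "e 1 * e 2 = 0"
  shows "bar_eq sm e (word_val e [U21, U21]) (word_val_opt e None)"
proof -
  have "bar_eq sm e (word_val e [U21, U21]) (word_val e [U21, Elt (e 2), U21, Elt (e 1)])"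
    using word_val_context_Some[OF word_U21, of sm e "[U21]" "[]"] by (simp only: append.simps)
  also have "bar_eq sm e \<dots> (word_val e [Elt (e 2), U21, Elt (e 1 * e 2), U21, Elt (e 1)])"
    using word_val_context_Some[OF word_U21_Elt[of sm e "e 2"], of "[]" "[U21, Elt (e 1)]"]
    by (simp only: append.simps)
  also have "bar_eq sm e \<dots> (word_val_opt e None)"
    using assms word_zero_inside[of sm e "[Elt (e 2), U21]" "[U21, Elt (e 1)]"] by simp
  finally show ?thesis .
qed

fun expand_letter :: "(nat \<Rightarrow> 'a::ring_1) \<Rightarrow> 'a letter \<Rightarrow> 'a letter list" where
  "expand_letter e (Elt a) = [Elt a]"
| "expand_letter e U12 = [Elt (e 1), U12, Elt (e 2)]"
| "expand_letter e U21 = [Elt (e 2), U21, Elt (e 1)]"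
| "expand_letter e (Idem i) = [Elt (e i)]"

fun merge_cons :: "'a::ring_1 letter \<Rightarrow> 'a letter list \<Rightarrow> 'a letter list" where
  "merge_cons (Elt a) (Elt b # r) = Elt (a * b) # r"
| "merge_cons l r = l # r"

fun merge_word :: "'a::ring_1 letter list \<Rightarrow> 'a letter list" where
  "merge_word [] = []"
| "merge_word (l # ls) = merge_cons l (merge_word ls)"

definition expand_word :: "(nat \<Rightarrow> 'a::ring_1) \<Rightarrow> 'a letter list \<Rightarrow> 'a letter list" where
  "expand_word e xs = merge_word (Elt 1 # concat (map (expand_letter e) xs) @ [Elt 1])"

lemma merge_cons_sound: "bar_eq sm e (word_val e (l # r)) (word_val e (merge_cons l r))"
proof (induction l r rule: merge_cons.induct)
  case (1 a b r)
  show ?case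
    using word_val_context_Some[OF word_Elt_mult, where xs = "[]" and ys = r] by simp
qed simp_all

lemma merge_word_sound: "bar_eq sm e (word_val e xs) (word_val e (merge_word xs))"
proof (induction xs)
  case (Cons l ls)
  have "bar_eq sm e (word_val e (l # ls)) (word_val e (l # merge_word ls))"
    using bar_eq_mul[OF bar_eq_refl Cons.IH] by simp
  also have "bar_eq sm e \<dots> (word_val e (merge_word (l # ls)))"
    using merge_cons_sound by simp
  finally show ?case .
qed simp

declare word_val.simps [simp del]

lemma expand_letters_sound:
  "bar_eq sm e (word_val e (concat (map (expand_letter e) xs))) (word_val e xs)"
proof (induction xs)
  case (Cons l ls)
  have "bar_eq sm e (word_val e (expand_letter e l)) (word_val e [l])"
    using bar_eq_sym[OF word_U12] bar_eq_sym[OF word_U21]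
    by (cases l) (simp_all add: word_val.simps)
  from bar_eq_mul[OF this Cons.IH] show ?case
    by (simp add: word_val_append[symmetric])
qed simp

lemma expand_word_sound: "bar_eq sm e (word_val e xs) (word_val e (expand_word e xs))"
proof -
  have "bar_eq sm e (fa_mul (word_val e [Elt 1])
          (fa_mul (word_val e (concat (map (expand_letter e) xs))) (word_val e [Elt 1])))
          (fa_mul (word_val e []) (fa_mul (word_val e xs) (word_val e [])))"
    by (intro bar_eq_mul word_Elt_one expand_letters_sound) simp_all
  then have "bar_eq sm e (word_val e (Elt 1 # concat (map (expand_letter e) xs) @ [Elt 1])) (word_val e xs)"
    by (simp only: word_val_append[symmetric] append_Nil append_Nil2 append_Cons)
  then show ?thesis
    unfolding expand_word_def using merge_word_sound bar_eq_sym bar_eq_trans by metis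
qed

text \<open>Kept as a constant so that the simplifier does not expand the normal forms back into
  products in the free algebra.\<close>

definition word_form :: "(nat \<Rightarrow> 'a) \<Rightarrow> (('k::field, 'a) fel \<Rightarrow> ('k, 'a) fel \<Rightarrow> 'k) \<Rightarrow> 'a letter list \<Rightarrow> 'a letter list \<Rightarrow> 'k" where
  "word_form e \<phi> xs ys = \<phi> (word_val e xs) (word_val e ys)"

lemma word_form_zero_left:
  assumes "bar_form sm e \<phi>" "Elt 0 \<in> set xs"
  shows "word_form e \<phi> xs ys = 0"
proof -
  obtain u v where "xs = u @ Elt 0 # v"
    using assms(2) by (meson split_list)
  then have "bar_eq sm e (word_val e xs) fa_zero"
    using word_zero_inside by simp
  then show ?thesis
    unfolding word_form_def using bar_form_Ibar_left[OF assms(1)]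
    by (simp add: bar_eq_def fa_sub_def fa_zero_def)
qed

lemma word_form_zero_right:
  assumes "bar_form sm e \<phi>" "Elt 0 \<in> set ys"
  shows "word_form e \<phi> xs ys = 0"
proof -
  obtain u v where "ys = u @ Elt 0 # v"
    using assms(2) by (meson split_list)
  then have "bar_eq sm e (word_val e ys) fa_zero"
    using word_zero_inside by simp
  then show ?thesis
    unfolding word_form_def using bar_form_Ibar_right[OF assms(1)]
    by (simp add: bar_eq_def fa_sub_def fa_zero_def)
qed

locale fusion_idempotents =
  fixes e :: "nat \<Rightarrow> 'a::ring_1"
  assumes e1_idem: "e 1 * e 1 = e 1" and e2_idem: "e 2 * e 2 = e 2"
    and e2_e1: "e 2 * e 1 = 0" and e1_e2: "e 1 * e 2 = 0"
begin

text \<open>\<open>reduce_word\<close> rewrites with the relations between \<open>e 1\<close>, \<open>e 2\<close>, \<open>E12\<close> and \<open>E21\<close>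
  (\<open>None\<close> means that the word vanishes in \<open>Abar\<close>). \<open>expand_word\<close> then writes \<open>E12 = e1 E12 e2\<close>,
  \<open>E21 = e2 E21 e1\<close>, pads with \<open>1\<close> and multiplies adjacent elements of \<open>A\<close>, so that normal forms
  alternate between elements of \<open>A\<close> and matrix units and can be compared by computing in \<open>A\<close>.\<close>

fun reduce_cons :: "'a letter \<Rightarrow> 'a letter list \<Rightarrow> 'a letter list option" where
  "reduce_cons (Elt a) (Elt b # r) = Some (Elt (a * b) # r)"
| "reduce_cons (Elt a) (Idem i # r) = Some (Elt (a * e i) # r)"
| "reduce_cons (Idem i) (Elt b # r) = Some (Elt (e i * b) # r)"
| "reduce_cons (Idem i) (Idem j # r) = Some (Elt (e i * e j) # r)"
| "reduce_cons U12 (U12 # r) = None"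
| "reduce_cons U21 (U21 # r) = None"
| "reduce_cons U12 (U21 # r) = reduce_cons (Idem 1) r"
| "reduce_cons U21 (U12 # r) = reduce_cons (Idem 2) r"
| "reduce_cons U12 (Idem i # r) =
     (if i = 2 then reduce_cons U12 r else if i = 1 then None else Some (U12 # Idem i # r))"
| "reduce_cons U21 (Idem i # r) =
     (if i = 1 then reduce_cons U21 r else if i = 2 then None else Some (U21 # Idem i # r))"
| "reduce_cons (Idem i) (U12 # r) =
     (if i = 1 then Some (U12 # r) else if i = 2 then None else Some (Idem i # U12 # r))"
| "reduce_cons (Idem i) (U21 # r) =
     (if i = 2 then Some (U21 # r) else if i = 1 then None else Some (Idem i # U21 # r))"
| "reduce_cons l r = Some (l # r)"

fun reduce_word :: "'a letter list \<Rightarrow> 'a letter list option" where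
  "reduce_word [] = Some []"
| "reduce_word (l # ls) = (case reduce_word ls of None \<Rightarrow> None | Some r \<Rightarrow> reduce_cons l r)"

definition normal_form :: "'a letter list \<Rightarrow> 'a letter list option" where
  "normal_form xs = map_option (expand_word e) (reduce_word xs)"


lemma word_Idem: "word_val e (Idem i # r) = word_val e (Elt (e i) # r)"
  "word_val e (l # Idem i # r) = word_val e (l # Elt (e i) # r)"
  by (simp_all add: word_val.simps)

lemma word_unit_Idem:
  "bar_eq sm e (word_val e [U12, Idem 2]) (word_val_opt e (Some [U12]))"
  "bar_eq sm e (word_val e [U12, Idem 1]) (word_val_opt e None)"
  "bar_eq sm e (word_val e [U21, Idem 1]) (word_val_opt e (Some [U21]))"
  "bar_eq sm e (word_val e [U21, Idem 2]) (word_val_opt e None)"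
  "bar_eq sm e (word_val e [Idem 1, U12]) (word_val_opt e (Some [U12]))"
  "bar_eq sm e (word_val e [Idem 2, U12]) (word_val_opt e None)"
  "bar_eq sm e (word_val e [Idem 2, U21]) (word_val_opt e (Some [U21]))"
  "bar_eq sm e (word_val e [Idem 1, U21]) (word_val_opt e None)"
proof -
  note idem = e1_idem e2_idem e2_e1 e1_e2
  have zero: "bar_eq sm e (word_val e [Elt a, l, Elt 0]) (word_val_opt e None)"
    "bar_eq sm e (word_val e [Elt 0, l, Elt a]) (word_val_opt e None)" for a l
    using word_zero_inside[of sm e "[Elt a, l]" "[]"] word_zero_inside[of sm e "[]" "[l, Elt a]"] by simp_all
  show "bar_eq sm e (word_val e [U12, Idem 2]) (word_val_opt e (Some [U12]))"
    using bar_eq_trans[OF word_U12_Elt[of sm e "e 2", unfolded idem] bar_eq_sym[OF word_U12]]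
    by (simp add: word_Idem)
  show "bar_eq sm e (word_val e [U12, Idem 1]) (word_val_opt e None)"
    using bar_eq_trans[OF word_U12_Elt[of sm e "e 1", unfolded idem] zero(1)] by (simp add: word_Idem)
  show "bar_eq sm e (word_val e [U21, Idem 1]) (word_val_opt e (Some [U21]))"
    using bar_eq_trans[OF word_U21_Elt[of sm e "e 1", unfolded idem] bar_eq_sym[OF word_U21]]
    by (simp add: word_Idem)
  show "bar_eq sm e (word_val e [U21, Idem 2]) (word_val_opt e None)"
    using bar_eq_trans[OF word_U21_Elt[of sm e "e 2", unfolded idem] zero(1)] by (simp add: word_Idem)
  show "bar_eq sm e (word_val e [Idem 1, U12]) (word_val_opt e (Some [U12]))"
    using bar_eq_trans[OF word_Elt_U12[of sm e "e 1", unfolded idem] bar_eq_sym[OF word_U12]]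
    by (simp add: word_Idem)
  show "bar_eq sm e (word_val e [Idem 2, U12]) (word_val_opt e None)"
    using bar_eq_trans[OF word_Elt_U12[of sm e "e 2", unfolded idem] zero(2)] by (simp add: word_Idem)
  show "bar_eq sm e (word_val e [Idem 2, U21]) (word_val_opt e (Some [U21]))"
    using bar_eq_trans[OF word_Elt_U21[of sm e "e 2", unfolded idem] bar_eq_sym[OF word_U21]]
    by (simp add: word_Idem)
  show "bar_eq sm e (word_val e [Idem 1, U21]) (word_val_opt e None)"
    using bar_eq_trans[OF word_Elt_U21[of sm e "e 1", unfolded idem] zero(2)] by (simp add: word_Idem)
qed

lemma reduce_cons_sound: "bar_eq sm e (word_val e (l # r)) (word_val_opt e (reduce_cons l r))"
proof (induction l r rule: reduce_cons.induct)
  case (1 a b r)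
  show ?case
    using word_val_context_Some[OF word_Elt_mult, where xs = "[]" and ys = r] by simp
next
  case (2 a i r)
  show ?case
    using word_val_context_Some[OF word_Elt_mult[of sm e a "e i"], where xs = "[]" and ys = r]
    by (simp add: word_val.simps)
next
  case (3 i b r)
  show ?case
    using word_val_context_Some[OF word_Elt_mult[of sm e "e i" b], where xs = "[]" and ys = r]
    by (simp add: word_val.simps)
next
  case (4 i j r)
  show ?case
    using word_val_context_Some[OF word_Elt_mult[of sm e "e i" "e j"], where xs = "[]" and ys = r]
    by (simp add: word_val.simps)
next
  case (5 r)
  show ?case
    using word_val_context_prefix[OF word_U12_U12[OF e2_e1], where r = r] by simp
next
  case (6 r)
  show ?case
    using word_val_context_prefix[OF word_U21_U21[OF e1_e2], where r = r] by simp
next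
  case (7 r)
  have "bar_eq sm e (word_val e (U12 # U21 # r)) (word_val e (Idem 1 # r))"
    using word_val_context_Some[OF word_U12_U21, where xs = "[]" and ys = r] by (simp add: word_Idem)
  with 7 show ?case by (simp add: bar_eq_trans)
next
  case (8 r)
  have "bar_eq sm e (word_val e (U21 # U12 # r)) (word_val e (Idem 2 # r))"
    using word_val_context_Some[OF word_U21_U12, where xs = "[]" and ys = r] by (simp add: word_Idem)
  with 8 show ?case by (simp add: bar_eq_trans)
next
  case (9 i r)
  show ?case
  proof (cases "i = 2")
    case True
    have "bar_eq sm e (word_val e (U12 # Idem 2 # r)) (word_val e (U12 # r))"
      using word_val_context_prefix[OF word_unit_Idem(1), where r = r] by simp
    with True "9.IH" show ?thesis by (simp add: bar_eq_trans)
  next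
    case False
    then show ?thesis
      using word_val_context_prefix[OF word_unit_Idem(2), where r = r] by auto
  qed
next
  case (10 i r)
  show ?case
  proof (cases "i = 1")
    case True
    have "bar_eq sm e (word_val e (U21 # Idem 1 # r)) (word_val e (U21 # r))"
      using word_val_context_prefix[OF word_unit_Idem(3), where r = r] by simp
    with True "10.IH" show ?thesis by (simp add: bar_eq_trans)
  next
    case False
    then show ?thesis
      using word_val_context_prefix[OF word_unit_Idem(4), where r = r] by auto
  qed
next
  case (11 i r)
  then show ?case
    using word_val_context_prefix[OF word_unit_Idem(5), where r = r]
      word_val_context_prefix[OF word_unit_Idem(6), where r = r] by auto
next
  case (12 i r)
  then show ?case
    using word_val_context_prefix[OF word_unit_Idem(7), where r = r]
      word_val_context_prefix[OF word_unit_Idem(8), where r = r] by auto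
qed simp_all

lemma reduce_word_sound: "bar_eq sm e (word_val e xs) (word_val_opt e (reduce_word xs))"
proof (induction xs)
  case (Cons l ls)
  have "bar_eq sm e (word_val e (l # ls)) (fa_mul (letter_val e l) (word_val_opt e (reduce_word ls)))"
    using bar_eq_mul[OF bar_eq_refl Cons.IH] by (simp add: word_val.simps)
  also have "bar_eq sm e \<dots> (word_val_opt e (reduce_word (l # ls)))"
  proof (cases "reduce_word ls")
    case None
    then show ?thesis by (simp add: fa_mul_zero_right)
  next
    case (Some r)
    then show ?thesis using reduce_cons_sound[of sm l r] by (simp add: word_val.simps)
  qed
  finally show ?case .
qed (simp add: word_val.simps)

lemma normal_form_sound: "bar_eq sm e (word_val e xs) (word_val_opt e (normal_form xs))"
  using reduce_word_sound[of sm xs] expand_word_sound[of sm e]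
  by (cases "reduce_word xs") (auto simp: normal_form_def intro: bar_eq_trans)

lemma bar_eq_by_normal_form:
  assumes "normal_form xs = normal_form ys" "normal_form xs \<noteq> None"
  shows "bar_eq sm e (word_val e xs) (word_val e ys)"
  using assms normal_form_sound[of sm xs] normal_form_sound[of sm ys]
  by (auto intro: bar_eq_trans bar_eq_sym)

lemma bar_eq_zero_by_normal_form:
  assumes "normal_form xs = None \<or> (\<exists>z. normal_form xs = Some z \<and> Elt 0 \<in> set z)"
  shows "bar_eq sm e (word_val e xs) fa_zero"
proof (cases "normal_form xs")
  case None
  then show ?thesis using normal_form_sound[of sm xs] by simp
next
  case (Some z)
  with assms obtain u v where "z = u @ Elt 0 # v"
    by (auto dest: split_list)
  then show ?thesis
    using normal_form_sound[of sm xs] Some word_zero_inside[of sm e u v] by (simp add: bar_eq_trans)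
qed

lemma bar_form_word_val:
  assumes "bar_form sm e \<phi>"
  shows "\<phi> (word_val e xs) (word_val e ys) = (case normal_form xs of None \<Rightarrow> 0
           | Some a \<Rightarrow> (case normal_form ys of None \<Rightarrow> 0 | Some b \<Rightarrow> word_form e \<phi> a b))"
proof -
  have "\<phi> (word_val e xs) (word_val e ys) = \<phi> (word_val_opt e (normal_form xs)) (word_val_opt e (normal_form ys))"
    using bar_form_cong_left[OF assms normal_form_sound] bar_form_cong_right[OF assms normal_form_sound]
    by simp
  moreover have "\<phi> fa_zero y = 0" "\<phi> y fa_zero = 0" if "y \<in> fa_car" for y
    using bar_form_Ibar_left[OF assms] bar_form_Ibar_right[OF assms] that by simp_all
  ultimately show ?thesis
    by (cases "normal_form xs"; cases "normal_form ys") (simp_all add: word_form_def)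
qed

end

section \<open>Generators of \<open>A\<^sup>f\<close>\<close>

lemma mult_eq_imp_assoc: "(a::'a::semigroup_mult) * b = c \<Longrightarrow> a * (b * x) = c * x"
  by (simp add: mult.assoc[symmetric])

context
  fixes \<alpha> p q :: "'a::{semigroup_mult, mult_zero}"
  assumes sandwich: "\<alpha> = p * \<alpha> * q"
begin

lemma sandwich_left_zero: "x * p = 0 \<Longrightarrow> x * \<alpha> = 0"
  by (subst sandwich) (metis mult.assoc mult_zero_left)

lemma sandwich_right_zero: "q * y = 0 \<Longrightarrow> \<alpha> * y = 0"
  by (subst sandwich) (metis mult.assoc mult_zero_right)

lemma sandwich_left_absorb: "x * p = p \<Longrightarrow> x * \<alpha> = \<alpha>"
  by (subst (1 2) sandwich) (metis mult.assoc)

lemma sandwich_right_absorb: "q * y = q \<Longrightarrow> \<alpha> * y = \<alpha>"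
  by (subst (1 2) sandwich) (metis mult.assoc)

end

fun letter_of :: "'a + bool \<Rightarrow> 'a letter" where
  "letter_of (Inl a) = Elt a"
| "letter_of (Inr True) = U12"
| "letter_of (Inr False) = U21"

lemma fa_gen_word_val: "fa_gen x = word_val e [letter_of x]"
  by (cases x rule: letter_of.cases) (simp_all add: word_val_letters(1-3)[symmetric] G_def E12_def E21_def)

fun gen_word :: "gkind \<Rightarrow> 'a \<Rightarrow> 'a letter list" where
  "gen_word KT \<alpha> = [Elt \<alpha>]"
| "gen_word KU \<alpha> = [U12, Elt \<alpha>]"
| "gen_word KV \<alpha> = [Elt \<alpha>, U21]"
| "gen_word KW \<alpha> = [U12, Elt \<alpha>, U21]"

lemma gen_el_word_val: "gen_el k \<alpha> = word_val e (gen_word k \<alpha>)"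
  by (cases k) (simp_all add: gen_el_def eplus_def eminus_def word_val.simps fa_mul_one_left
      fa_mul_one_right fa_mul_assoc)

lemma fa_car_eplus [simp]: "eplus k \<in> fa_car" and fa_car_eminus [simp]: "eminus k \<in> fa_car"
  by (cases k; simp add: eplus_def eminus_def)+

lemma fa_car_gen_el [simp]: "gen_el k \<alpha> \<in> fa_car"
  by (simp add: gen_el_def)

lemma fa_car_epsb [simp]: "epsb e \<in> fa_car"
  by (simp add: epsb_def)

lemma epsb_add_G_e2: "fa_add (epsb e) (G (e 2)) = fa_one"
  unfolding epsb_def fa_add_def fa_sub_def by simp

lemma epsb_bar_eq: "bar_eq sm e (epsb e) (word_val e [Elt (epsA e)])"
proof -
  have "bar_eq sm e (G (1 - e 2)) (fa_sub (G 1) (G (e 2)))"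
    by (rule bar_eq_G_diff)
  also have "bar_eq sm e \<dots> (epsb e)"
    unfolding epsb_def fa_sub_eq_add_sc by (rule bar_eq_add[OF bar_eq_G_one bar_eq_refl])
  finally show ?thesis
    by (simp add: epsA_def word_val_letters[symmetric] bar_eq_sym)
qed

lemma bar_eq_sandwich_words:
  assumes "bar_eq sm e X (word_val e xs)" "bar_eq sm e Y (word_val e zs)" "X \<in> fa_car" "Y \<in> fa_car"
  shows "bar_eq sm e (fa_mul (fa_mul X (word_val e ys)) Y) (word_val e (xs @ ys @ zs))"
  using bar_eq_mul[OF bar_eq_mul[OF assms(1) bar_eq_refl] assms(2)] assms(3,4)
  by (simp add: word_val_append fa_mul_assoc)

inductive_set gen_span :: "(nat \<Rightarrow> 'a::ring_1) \<Rightarrow> ('k::field, 'a) fel set" for e where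
  gen: "gen_ok e k \<alpha> \<Longrightarrow> gen_el k \<alpha> \<in> gen_span e"
| add: "x \<in> gen_span e \<Longrightarrow> y \<in> gen_span e \<Longrightarrow> fa_add x y \<in> gen_span e"
| sc: "x \<in> gen_span e \<Longrightarrow> fa_sc c x \<in> gen_span e"
| mul: "x \<in> gen_span e \<Longrightarrow> y \<in> gen_span e \<Longrightarrow> fa_mul x y \<in> gen_span e"

lemma zero_in_gen_span: "fa_zero \<in> gen_span e"
proof -
  have "gen_ok e KT 0"
    by (simp add: gen_ok_def)
  then have "fa_sc 0 (gen_el KT 0) \<in> gen_span e"
    by (intro gen_span.sc gen_span.gen)
  then show ?thesis
    by (simp add: fa_sc_0)
qed

lemma Af_carrier: "a \<in> Af sm e \<Longrightarrow> a \<in> fa_car"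
  and Af_sandwich: "a \<in> Af sm e \<Longrightarrow> bar_eq sm e a (fa_mul (fa_mul (epsb e) a) (epsb e))"
  by (simp_all add: Af_def)

context fusion_idempotents
begin

lemmas idem_rules = e1_idem e2_idem e2_e1 e1_e2
  mult_eq_imp_assoc[OF e1_idem] mult_eq_imp_assoc[OF e2_idem]
  mult_eq_imp_assoc[OF e2_e1] mult_eq_imp_assoc[OF e1_e2]

text \<open>The simplifier rewrites numeral indices such as \<open>e 1\<close> to \<open>e (Suc 0)\<close>, hence both forms.\<close>

lemmas idem_simps = idem_rules idem_rules[simplified]

lemmas word_simps = word_val_letters(1-4)[where e = e] fa_mul_sc_left fa_mul_sc_right fa_neg_eq_sc fa_sc_sc
  word_val_append[symmetric] normal_form_def expand_word_def mult.assoc idem_simps epsA_def ring_distribs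

lemma epsA_idem: "epsA e * epsA e = epsA e"
  by (simp add: epsA_def algebra_simps e2_idem)

lemma gen_ok_mult_e2:
  assumes "gen_ok e k \<alpha>"
  shows "k = KT \<Longrightarrow> e 2 * \<alpha> = 0 \<and> \<alpha> * e 2 = 0"
    and "k = KU \<Longrightarrow> e 2 * \<alpha> = \<alpha> \<and> \<alpha> * e 2 = 0"
    and "k = KV \<Longrightarrow> e 2 * \<alpha> = 0 \<and> \<alpha> * e 2 = \<alpha>"
    and "k = KW \<Longrightarrow> e 2 * \<alpha> = \<alpha> \<and> \<alpha> * e 2 = \<alpha>"
proof -
  have eps: "e 2 * epsA e = 0" "epsA e * e 2 = 0"
    by (simp_all add: epsA_def algebra_simps e2_idem)
  show "k = KT \<Longrightarrow> e 2 * \<alpha> = 0 \<and> \<alpha> * e 2 = 0"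
    using assms unfolding gen_ok_def
    by (auto intro: sandwich_left_zero[OF _ eps(1)] sandwich_right_zero[OF _ eps(2)])
  show "k = KU \<Longrightarrow> e 2 * \<alpha> = \<alpha> \<and> \<alpha> * e 2 = 0"
    using assms unfolding gen_ok_def
    by (auto intro: sandwich_left_absorb[OF _ e2_idem] sandwich_right_zero[OF _ eps(2)])
  show "k = KV \<Longrightarrow> e 2 * \<alpha> = 0 \<and> \<alpha> * e 2 = \<alpha>"
    using assms unfolding gen_ok_def
    by (auto intro: sandwich_left_zero[OF _ eps(1)] sandwich_right_absorb[OF _ e2_idem])
  show "k = KW \<Longrightarrow> e 2 * \<alpha> = \<alpha> \<and> \<alpha> * e 2 = \<alpha>"
    using assms unfolding gen_ok_def
    by (auto intro: sandwich_left_absorb[OF _ e2_idem] sandwich_right_absorb[OF _ e2_idem])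
qed

lemma gen_el_in_Af:
  assumes "gen_ok e k \<alpha>"
  shows "gen_el k \<alpha> \<in> Af sm e"
proof -
  have "bar_eq sm e (word_val e (gen_word k \<alpha>))
          (word_val e ([Elt (epsA e)] @ gen_word k \<alpha> @ [Elt (epsA e)]))"
    using gen_ok_mult_e2[OF assms]
    by (cases k; intro bar_eq_by_normal_form)
       (auto simp: word_simps dest: mult_eq_imp_assoc)
  also have "bar_eq sm e \<dots> (fa_mul (fa_mul (epsb e) (gen_el k \<alpha>)) (epsb e))"
    unfolding gen_el_word_val[of k \<alpha> e]
    by (rule bar_eq_sym, rule bar_eq_sandwich_words[OF epsb_bar_eq epsb_bar_eq]) simp_all
  finally show ?thesis
    by (simp add: Af_def gen_el_word_val[symmetric])
qed

lemma epsb_idem: "bar_eq sm e (fa_mul (epsb e) (epsb e)) (epsb e)"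
proof -
  have "bar_eq sm e (fa_mul (epsb e) (epsb e)) (word_val e [Elt (epsA e), Elt (epsA e)])"
    using bar_eq_mul[OF epsb_bar_eq epsb_bar_eq] by (simp add: word_val_append[symmetric])
  also have "bar_eq sm e \<dots> (word_val e [Elt (epsA e)])"
    by (rule bar_eq_by_normal_form) (simp_all add: word_simps)
  also have "bar_eq sm e \<dots> (epsb e)"
    by (rule bar_eq_sym[OF epsb_bar_eq])
  finally show ?thesis .
qed

lemma Af_add: "a \<in> Af sm e \<Longrightarrow> b \<in> Af sm e \<Longrightarrow> fa_add a b \<in> Af sm e"
  unfolding Af_def using bar_eq_add by (fastforce simp: fa_distrib_left fa_distrib_right)

lemma Af_sc: "a \<in> Af sm e \<Longrightarrow> fa_sc c a \<in> Af sm e"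
  unfolding Af_def using bar_eq_sc by (fastforce simp: fa_mul_sc_left fa_mul_sc_right)

lemma Af_mul_epsb_right:
  assumes "a \<in> Af sm e"
  shows "bar_eq sm e (fa_mul a (epsb e)) a"
proof -
  have car: "a \<in> fa_car"
    using Af_carrier[OF assms] .
  have "bar_eq sm e (fa_mul a (epsb e)) (fa_mul (fa_mul (fa_mul (epsb e) a) (epsb e)) (epsb e))"
    by (rule bar_eq_mul[OF Af_sandwich[OF assms] bar_eq_refl]) (simp_all add: car)
  also have "\<dots> = fa_mul (fa_mul (epsb e) a) (fa_mul (epsb e) (epsb e))"
    by (simp add: fa_mul_assoc)
  also have "bar_eq sm e \<dots> (fa_mul (fa_mul (epsb e) a) (epsb e))"
    by (rule bar_eq_mul[OF bar_eq_refl epsb_idem]) (simp_all add: car)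
  also have "bar_eq sm e \<dots> a"
    by (rule bar_eq_sym[OF Af_sandwich[OF assms]])
  finally show ?thesis .
qed

lemma Af_mul_epsb_left:
  assumes "a \<in> Af sm e"
  shows "bar_eq sm e (fa_mul (epsb e) a) a"
proof -
  have car: "a \<in> fa_car"
    using Af_carrier[OF assms] .
  have "bar_eq sm e (fa_mul (epsb e) a) (fa_mul (epsb e) (fa_mul (fa_mul (epsb e) a) (epsb e)))"
    by (rule bar_eq_mul[OF bar_eq_refl Af_sandwich[OF assms]]) (simp_all add: car)
  also have "\<dots> = fa_mul (fa_mul (fa_mul (epsb e) (epsb e)) a) (epsb e)"
    by (simp add: fa_mul_assoc)
  also have "bar_eq sm e \<dots> (fa_mul (fa_mul (epsb e) a) (epsb e))"
    by (rule bar_eq_mul[OF bar_eq_mul[OF epsb_idem bar_eq_refl] bar_eq_refl]) (simp_all add: car)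
  also have "bar_eq sm e \<dots> a"
    by (rule bar_eq_sym[OF Af_sandwich[OF assms]])
  finally show ?thesis .
qed

lemma Af_mul:
  assumes "a \<in> Af sm e" "b \<in> Af sm e"
  shows "fa_mul a b \<in> Af sm e"
proof -
  have "bar_eq sm e (fa_mul (fa_mul (epsb e) a) (fa_mul b (epsb e))) (fa_mul a b)"
    by (rule bar_eq_mul[OF Af_mul_epsb_left[OF assms(1)] Af_mul_epsb_right[OF assms(2)]])
      (simp_all add: Af_carrier[OF assms(1)] Af_carrier[OF assms(2)])
  then show ?thesis
    unfolding Af_def using Af_carrier[OF assms(1)] Af_carrier[OF assms(2)]
    by (simp add: fa_mul_assoc bar_eq_sym)
qed

lemma Af_bar_eq_closed:
  assumes "a \<in> Af sm e" "b \<in> fa_car" "bar_eq sm e a b"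
  shows "b \<in> Af sm e"
proof -
  have "bar_eq sm e b a"
    using assms(3) by (rule bar_eq_sym)
  also have "bar_eq sm e a (fa_mul (fa_mul (epsb e) a) (epsb e))"
    using Af_sandwich[OF assms(1)] .
  also have "bar_eq sm e \<dots> (fa_mul (fa_mul (epsb e) b) (epsb e))"
    by (rule bar_eq_sandwich[OF assms(3)]) (simp_all add: Af_carrier[OF assms(1)] assms(2))
  finally show ?thesis
    unfolding Af_def using assms(2) by simp
qed

lemma gen_span_Af: "x \<in> gen_span e \<Longrightarrow> x \<in> Af sm e"
  by (induction rule: gen_span.induct) (simp_all add: gen_el_in_Af Af_add Af_sc Af_mul)

lemma word_in_span_by_generator:
  assumes "gen_ok e k \<alpha>" "normal_form w = normal_form (gen_word k \<alpha>)" "normal_form w \<noteq> None"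
  shows "\<exists>b\<in>gen_span e. bar_eq sm e (word_val e w) b"
  using assms gen_span.gen[OF assms(1)] bar_eq_by_normal_form[OF assms(2,3)]
  by (auto simp: gen_el_word_val[of k \<alpha> e])

lemma word_in_span_by_zero:
  assumes "normal_form w = None \<or> (\<exists>z. normal_form w = Some z \<and> Elt 0 \<in> set z)"
  shows "\<exists>b\<in>gen_span e. bar_eq sm e (word_val e w) b"
  using zero_in_gen_span bar_eq_zero_by_normal_form[OF assms] by blast

lemma gen_ok_corners:
  "gen_ok e KT (epsA e * a * epsA e)" "gen_ok e KU (e 2 * a * epsA e)"
  "gen_ok e KV (epsA e * a * e 2)" "gen_ok e KW (e 2 * a * e 2)"
  by (simp_all add: gen_ok_def mult.assoc epsA_idem mult_eq_imp_assoc[OF epsA_idem] e2_idem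
      mult_eq_imp_assoc[OF e2_idem])

lemma gen_ok_units: "gen_ok e KT (e 1)" "gen_ok e KT (epsA e)"
  by (simp_all add: gen_ok_def epsA_idem, simp add: epsA_def algebra_simps idem_simps)

lemma corner_word_in_span:
  assumes "xs \<in> {[Elt (epsA e)], [U12]}" "zs \<in> {[Elt (epsA e)], [U21]}"
    and "ys \<in> {[], [Elt a], [U12], [U21]}"
  shows "\<exists>b\<in>gen_span e. bar_eq sm e (word_val e (xs @ ys @ zs)) b"
proof -
  have letter: "\<exists>b\<in>gen_span e. bar_eq sm e (word_val e (xs @ [Elt a] @ zs)) b"
    using assms(1,2)
    apply (elim insertE emptyE; simp only: append.simps)
    subgoal by (rule word_in_span_by_generator[OF gen_ok_corners(1)]) (simp_all add: word_simps)
    subgoal by (rule word_in_span_by_generator[OF gen_ok_corners(3)]) (simp_all add: word_simps)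
    subgoal by (rule word_in_span_by_generator[OF gen_ok_corners(2)]) (simp_all add: word_simps)
    subgoal by (rule word_in_span_by_generator[OF gen_ok_corners(4)]) (simp_all add: word_simps)
    done
  have empty: "\<exists>b\<in>gen_span e. bar_eq sm e (word_val e (xs @ [] @ zs)) b"
    using assms(1,2)
    apply (elim insertE emptyE; simp only: append.simps)
    subgoal by (rule word_in_span_by_generator[OF gen_ok_units(2)]) (simp_all add: word_simps)
    subgoal by (rule word_in_span_by_zero) (simp add: word_simps)
    subgoal by (rule word_in_span_by_zero) (simp add: word_simps)
    subgoal by (rule word_in_span_by_generator[OF gen_ok_units(1)]) (simp_all add: word_simps)
    done
  have U12: "\<exists>b\<in>gen_span e. bar_eq sm e (word_val e (xs @ [U12] @ zs)) b"
    using assms(1,2)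
    apply (elim insertE emptyE; simp only: append.simps)
    subgoal by (rule word_in_span_by_zero) (simp add: word_simps)
    subgoal by (rule word_in_span_by_generator[OF gen_ok_units(1)]) (simp_all add: word_simps)
    subgoal by (rule word_in_span_by_zero) (simp add: word_simps)
    subgoal by (rule word_in_span_by_zero) (simp add: word_simps)
    done
  have U21: "\<exists>b\<in>gen_span e. bar_eq sm e (word_val e (xs @ [U21] @ zs)) b"
    using assms(1,2)
    apply (elim insertE emptyE; simp only: append.simps)
    subgoal by (rule word_in_span_by_zero) (simp add: word_simps)
    subgoal by (rule word_in_span_by_zero) (simp add: word_simps)
    subgoal by (rule word_in_span_by_generator[OF gen_ok_units(1)]) (simp_all add: word_simps)
    subgoal by (rule word_in_span_by_zero) (simp add: word_simps)
    done
  show ?thesis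
    using assms(3) letter empty U12 U21 by blast
qed

lemma corner_sandwich_in_span:
  assumes "X \<in> {epsb e, E12}" "Y \<in> {epsb e, E21}" "ys \<in> {[], [Elt a], [U12], [U21]}"
  shows "\<exists>b\<in>gen_span e. bar_eq sm e (fa_mul (fa_mul X (word_val e ys)) Y) b"
proof -
  have "\<exists>xs\<in>{[Elt (epsA e)], [U12]}. bar_eq sm e X (word_val e xs)"
    using assms(1) epsb_bar_eq[of sm e] by (auto simp: word_val_letters(2)[of e, symmetric])
  then obtain xs where xs: "xs \<in> {[Elt (epsA e)], [U12]}" "bar_eq sm e X (word_val e xs)" ..
  have "\<exists>zs\<in>{[Elt (epsA e)], [U21]}. bar_eq sm e Y (word_val e zs)"
    using assms(2) epsb_bar_eq[of sm e] by (auto simp: word_val_letters(3)[of e, symmetric])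
  then obtain zs where zs: "zs \<in> {[Elt (epsA e)], [U21]}" "bar_eq sm e Y (word_val e zs)" ..
  have "bar_eq sm e (fa_mul (fa_mul X (word_val e ys)) Y) (word_val e (xs @ ys @ zs))"
    by (rule bar_eq_sandwich_words[OF xs(2) zs(2)]) (use assms in auto)
  moreover obtain b where "b \<in> gen_span e" "bar_eq sm e (word_val e (xs @ ys @ zs)) b"
    using corner_word_in_span[OF xs(1) zs(1) assms(3)] by blast
  ultimately show ?thesis
    using bar_eq_trans by blast
qed

text \<open>Inserting \<open>1 = \<epsilon> \<epsilon> + E21 E12\<close> after the first letter splits a corner
  \<open>X w Y\<close> into products of two shorter corners.\<close>

lemma corner_in_span:
  assumes "X \<in> {epsb e, E12}" "Y \<in> {epsb e, E21}"
  shows "\<exists>b\<in>gen_span e. bar_eq sm e (fa_mul (fa_mul X (fa_word w)) Y) b"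
  using assms
proof (induction w arbitrary: X Y)
  case Nil
  then show ?case
    using corner_sandwich_in_span[of X Y "[]"] by (simp add: fa_word_Nil word_val_letters(4)[of e])
next
  case (Cons x w)
  have car: "X \<in> fa_car" "Y \<in> fa_car"
    using Cons.prems by auto
  define P where "P = fa_mul X (fa_gen x)"
  define Q where "Q = fa_mul (fa_word w) Y"
  have car_PQ: "P \<in> fa_car" "Q \<in> fa_car"
    using car by (simp_all add: P_def Q_def)
  obtain a where a: "[letter_of x] \<in> {[], [Elt a], [U12], [U21]}"
    by (cases x rule: letter_of.cases) auto
  obtain b1 where b1: "b1 \<in> gen_span e" "bar_eq sm e (fa_mul P (epsb e)) b1"
    using corner_sandwich_in_span[OF Cons.prems(1) _ a, of "epsb e"]
    by (auto simp: P_def fa_gen_word_val[of x e])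
  obtain b2 where b2: "b2 \<in> gen_span e" "bar_eq sm e (fa_mul P E21) b2"
    using corner_sandwich_in_span[OF Cons.prems(1) _ a, of E21]
    by (auto simp: P_def fa_gen_word_val[of x e])
  obtain c1 where c1: "c1 \<in> gen_span e" "bar_eq sm e (fa_mul (epsb e) Q) c1"
    using Cons.IH[of "epsb e" Y] Cons.prems(2) by (auto simp: Q_def fa_mul_assoc)
  obtain c2 where c2: "c2 \<in> gen_span e" "bar_eq sm e (fa_mul E12 Q) c2"
    using Cons.IH[of E12 Y] Cons.prems(2) by (auto simp: Q_def fa_mul_assoc)
  have "bar_eq sm e (fa_mul (fa_mul X (fa_word (x # w))) Y)
          (fa_add (fa_mul (fa_mul P (epsb e)) Q) (fa_mul (fa_mul P (G (e 2))) Q))"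
    by (simp add: P_def Q_def fa_word_Cons fa_mul_assoc fa_distrib_left[symmetric]
        fa_distrib_right[symmetric] epsb_add_G_e2 fa_mul_one_left)
  also have "bar_eq sm e \<dots> (fa_add (fa_mul (fa_mul P (fa_mul (epsb e) (epsb e))) Q)
                                     (fa_mul (fa_mul P (fa_mul E21 E12)) Q))"
    by (rule bar_eq_add; rule bar_eq_sandwich, rule bar_eq_sym[OF epsb_idem] bar_eq_sym[OF bar_eq_E21_E12])
      (simp_all add: car_PQ)
  also have "bar_eq sm e \<dots> (fa_add (fa_mul (fa_mul P (epsb e)) (fa_mul (epsb e) Q))
                                     (fa_mul (fa_mul P E21) (fa_mul E12 Q)))"
    by (simp add: fa_mul_assoc)
  also have "bar_eq sm e \<dots> (fa_add (fa_mul b1 c1) (fa_mul b2 c2))"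
    using bar_eq_add[OF bar_eq_mul[OF b1(2) c1(2)] bar_eq_mul[OF b2(2) c2(2)]]
    by (simp add: car_PQ gen_span_Af[THEN Af_carrier] b1 b2)
  finally have "bar_eq sm e (fa_mul (fa_mul X (fa_word (x # w))) Y) (fa_add (fa_mul b1 c1) (fa_mul b2 c2))" .
  moreover have "fa_add (fa_mul b1 c1) (fa_mul b2 c2) \<in> gen_span e"
    using b1 b2 c1 c2 by (intro gen_span.add gen_span.mul)
  ultimately show ?case
    by blast
qed

lemma Af_gen_span:
  assumes "a \<in> Af sm e"
  shows "\<exists>b\<in>gen_span e. bar_eq sm e a b"
proof -
  have "\<exists>b\<in>gen_span e. bar_eq sm e (fa_mul (fa_mul (epsb e) f) (epsb e)) b"
    if "finite S" "{w. f w \<noteq> 0} \<subseteq> S" for S f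
    using that
  proof (induction S arbitrary: f rule: finite_induct)
    case empty
    then have "f = fa_zero"
      by (auto simp: fa_zero_def)
    then show ?case
      using zero_in_gen_span[of e] by (force simp: fa_mul_zero_left fa_mul_zero_right)
  next
    case (insert w S)
    define f' where "f' = (\<lambda>u. if u = w then 0 else f u)"
    have f: "f = fa_add f' (fa_sc (f w) (fa_word w))"
      by (auto simp: f'_def fa_add_def fa_sc_def fa_word_def)
    have "{u. f' u \<noteq> 0} \<subseteq> S"
      using insert.prems by (auto simp: f'_def)
    then obtain b1 where b1: "b1 \<in> gen_span e" "bar_eq sm e (fa_mul (fa_mul (epsb e) f') (epsb e)) b1"
      using insert.IH by blast
    obtain b2 where b2: "b2 \<in> gen_span e" "bar_eq sm e (fa_mul (fa_mul (epsb e) (fa_word w)) (epsb e)) b2"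
      using corner_in_span[where X = "epsb e" and Y = "epsb e" and w = w] by auto
    have "bar_eq sm e (fa_mul (fa_mul (epsb e) f) (epsb e)) (fa_add b1 (fa_sc (f w) b2))"
      using bar_eq_add[OF b1(2) bar_eq_sc[OF b2(2)]]
      by (subst f) (simp add: fa_distrib_left fa_distrib_right fa_mul_sc_left fa_mul_sc_right)
    then show ?case
      using b1 b2 by (blast intro: gen_span.add gen_span.sc)
  qed
  moreover have "finite {w. a w \<noteq> 0}"
    using Af_carrier[OF assms] by (simp add: fa_car_iff)
  ultimately obtain b where "b \<in> gen_span e" "bar_eq sm e (fa_mul (fa_mul (epsb e) a) (epsb e)) b"
    by blast
  then show ?thesis
    using bar_eq_trans[OF Af_sandwich[OF assms]] by blast
qed

end

section \<open>Double brackets evaluated against bilinear forms\<close>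

definition tensor_eval :: "(('k::field, 'a) fel \<Rightarrow> ('k, 'a) fel \<Rightarrow> 'k) \<Rightarrow> (('k, 'a) fel \<times> ('k, 'a) fel) list \<Rightarrow> 'k" where
  "tensor_eval \<phi> xs = (\<Sum>(x, y)\<leftarrow>xs. \<phi> x y)"

lemma tensor_eval_Nil [simp]: "tensor_eval \<phi> [] = 0"
  and tensor_eval_Cons [simp]: "tensor_eval \<phi> ((x, y) # xs) = \<phi> x y + tensor_eval \<phi> xs"
  and tensor_eval_append [simp]: "tensor_eval \<phi> (xs @ ys) = tensor_eval \<phi> xs + tensor_eval \<phi> ys"
  by (simp_all add: tensor_eval_def)

lemma tensor_eval_map:
  "tensor_eval \<phi> (map (\<lambda>(x, y). (f x y, g x y)) xs) = tensor_eval (\<lambda>x y. \<phi> (f x y) (g x y)) xs"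
  by (induction xs) (auto simp: tensor_eval_def)

lemma bar_teq_iff: "bar_teq sm e xs ys \<longleftrightarrow> (\<forall>\<phi>. bar_form sm e \<phi> \<longrightarrow> tensor_eval \<phi> xs = tensor_eval \<phi> ys)"
  unfolding bar_teq_def tensor_eval_def ..

lemma bar_teqD: "bar_teq sm e xs ys \<Longrightarrow> bar_form sm e \<phi> \<Longrightarrow> tensor_eval \<phi> xs = tensor_eval \<phi> ys"
  by (simp add: bar_teq_iff)

context
  fixes sm :: "'k::field \<Rightarrow> 'a::ring_1 \<Rightarrow> 'a" and e :: "nat \<Rightarrow> 'a"
    and F :: "('k, 'a) fel \<Rightarrow> ('k, 'a) fel \<Rightarrow> (('k, 'a) fel \<times> ('k, 'a) fel) list"
    and \<phi> :: "('k, 'a) fel \<Rightarrow> ('k, 'a) fel \<Rightarrow> 'k"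
  assumes F: "fus_dbracket sm e F" and bf: "bar_form sm e \<phi>"
begin

lemma fus_dbracket_cong:
  assumes "a \<in> Af sm e" "a' \<in> Af sm e" "b \<in> Af sm e" "b' \<in> Af sm e" "bar_eq sm e a a'" "bar_eq sm e b b'"
  shows "tensor_eval \<phi> (F a b) = tensor_eval \<phi> (F a' b')"
proof -
  have "bar_teq sm e (F a b) (F a' b')"
    using F unfolding fus_dbracket_def Let_def by (elim conjE) (simp add: assms)
  then show ?thesis
    using bf by (rule bar_teqD)
qed

lemma fus_dbracket_add_right:
  assumes "a \<in> Af sm e" "b \<in> Af sm e" "b' \<in> Af sm e"
  shows "tensor_eval \<phi> (F a (fa_add b b')) = tensor_eval \<phi> (F a b) + tensor_eval \<phi> (F a b')"
proof -
  have "bar_teq sm e (F a (fa_add b b')) (F a b @ F a b')"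
    using F unfolding fus_dbracket_def Let_def by (elim conjE) (simp add: assms)
  then show ?thesis
    using bar_teqD[OF _ bf] by simp
qed

lemma fus_dbracket_sc_right:
  assumes "a \<in> Af sm e" "b \<in> Af sm e"
  shows "tensor_eval \<phi> (F a (fa_sc c b)) = tensor_eval (\<lambda>x y. \<phi> (fa_sc c x) y) (F a b)"
proof -
  have "bar_teq sm e (F a (fa_sc c b)) (map (\<lambda>(x, y). (fa_sc c x, y)) (F a b))"
    using F unfolding fus_dbracket_def Let_def by (elim conjE) (simp add: assms)
  then show ?thesis
    using bar_teqD[OF _ bf] by (simp add: tensor_eval_map[where g = "\<lambda>x y. y"])
qed

lemma fus_dbracket_skew:
  assumes "a \<in> Af sm e" "b \<in> Af sm e"
  shows "tensor_eval \<phi> (F a b) = tensor_eval (\<lambda>x y. \<phi> (fa_neg y) x) (F b a)"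
proof -
  have "bar_teq sm e (F a b) (map (\<lambda>(x, y). (fa_neg y, x)) (F b a))"
    using F unfolding fus_dbracket_def Let_def by (elim conjE) (simp add: assms)
  then show ?thesis
    using bar_teqD[OF _ bf] by (simp add: tensor_eval_map)
qed

lemma fus_dbracket_Leibniz:
  assumes "a \<in> Af sm e" "b \<in> Af sm e" "c \<in> Af sm e"
  shows "tensor_eval \<phi> (F a (fa_mul b c)) =
    tensor_eval (\<lambda>x y. \<phi> x (fa_mul y c)) (F a b) + tensor_eval (\<lambda>x y. \<phi> (fa_mul b x) y) (F a c)"
proof -
  have "bar_teq sm e (F a (fa_mul b c))
          (map (\<lambda>(x, y). (x, fa_mul y c)) (F a b) @ map (\<lambda>(x, y). (fa_mul b x, y)) (F a c))"
    using F unfolding fus_dbracket_def Let_def by (elim conjE) (simp add: assms)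
  then show ?thesis
    using bar_teqD[OF _ bf]
    by (simp add: tensor_eval_map[where f = "\<lambda>x y. x"] tensor_eval_map[where g = "\<lambda>x y. y"])
qed

end

context
  fixes sm :: "'k::field \<Rightarrow> 'a::ring_1 \<Rightarrow> 'a" and e :: "nat \<Rightarrow> 'a"
    and \<phi> :: "('k, 'a) fel \<Rightarrow> ('k, 'a) fel \<Rightarrow> 'k"
  assumes bf: "bar_form sm e \<phi>"
begin

lemma tensor_eval_mom_rhs:
  assumes "E \<in> fa_car" "P \<in> fa_car" "a \<in> fa_car"
  shows "tensor_eval \<phi> (mom_rhs E P a) = 1/2 * \<phi> (fa_mul a E) P + 1/2 * \<phi> (fa_mul a P) E
     - 1/2 * \<phi> E (fa_mul P a) - 1/2 * \<phi> P (fa_mul E a)"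
  using assms by (simp add: mom_rhs_def bar_form_sc_left[OF bf])

context
  fixes E P :: "('k, 'a) fel"
  assumes car: "E \<in> fa_car" "P \<in> fa_car"
begin

lemma mom_rhs_add:
  "x \<in> fa_car \<Longrightarrow> y \<in> fa_car \<Longrightarrow>
   tensor_eval \<phi> (mom_rhs E P (fa_add x y)) = tensor_eval \<phi> (mom_rhs E P x) + tensor_eval \<phi> (mom_rhs E P y)"
  using car by (simp add: tensor_eval_mom_rhs fa_distrib_left fa_distrib_right
      bar_form_add_left[OF bf] bar_form_add_right[OF bf] algebra_simps)

lemma mom_rhs_sc:
  "x \<in> fa_car \<Longrightarrow>
   tensor_eval \<phi> (mom_rhs E P (fa_sc c x)) = tensor_eval (\<lambda>u v. \<phi> (fa_sc c u) v) (mom_rhs E P x)"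
  using car by (simp add: mom_rhs_def fa_mul_sc_left fa_mul_sc_right
      bar_form_sc_left[OF bf] bar_form_sc_right[OF bf] algebra_simps)

lemma mom_rhs_Leibniz:
  "x \<in> fa_car \<Longrightarrow> y \<in> fa_car \<Longrightarrow>
   tensor_eval \<phi> (mom_rhs E P (fa_mul x y)) =
     tensor_eval (\<lambda>u v. \<phi> u (fa_mul v y)) (mom_rhs E P x) + tensor_eval (\<lambda>u v. \<phi> (fa_mul x u) v) (mom_rhs E P y)"
  using car by (simp add: mom_rhs_def fa_mul_sc_left fa_mul_sc_right fa_mul_assoc
      bar_form_sc_left[OF bf] bar_form_sc_right[OF bf] algebra_simps)

lemma mom_rhs_cong:
  assumes "bar_eq sm e P P'" "P' \<in> fa_car" "bar_eq sm e a a'" "a \<in> fa_car" "a' \<in> fa_car"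
  shows "tensor_eval \<phi> (mom_rhs E P a) = tensor_eval \<phi> (mom_rhs E P' a')"
proof -
  have "bar_eq sm e (fa_mul a E) (fa_mul a' E)" "bar_eq sm e (fa_mul a P) (fa_mul a' P')"
    "bar_eq sm e (fa_mul P a) (fa_mul P' a')" "bar_eq sm e (fa_mul E a) (fa_mul E a')"
    using assms car by (simp_all add: bar_eq_mul)
  with assms car show ?thesis
    by (simp add: tensor_eval_mom_rhs bar_form_cong_left[OF bf] bar_form_cong_right[OF bf])
qed

end

end

context fusion_idempotents
begin

lemma fus_dbracket_Leibniz_left:
  assumes F: "fus_dbracket sm e F" and bf: "bar_form sm e \<phi>"
    and Af: "a \<in> Af sm e" "b \<in> Af sm e" "c \<in> Af sm e"
  shows "tensor_eval \<phi> (F (fa_mul a b) c) =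
    tensor_eval (\<lambda>x y. \<phi> (fa_neg (fa_mul x b)) (fa_neg y)) (F a c)
    + tensor_eval (\<lambda>x y. \<phi> (fa_neg x) (fa_mul a (fa_neg y))) (F b c)"
proof -
  note car = Af_carrier[OF Af(1)] Af_carrier[OF Af(2)]
  have skew: "bar_form sm e (\<lambda>x y. \<phi> (fa_neg y) x)"
    by (rule bar_form_skew[OF bf])
  have "tensor_eval \<phi> (F (fa_mul a b) c) = tensor_eval (\<lambda>x y. \<phi> (fa_neg y) x) (F c (fa_mul a b))"
    by (rule fus_dbracket_skew[OF F bf Af_mul[OF Af(1,2)] Af(3)])
  also have "\<dots> = tensor_eval (\<lambda>x y. \<phi> (fa_neg (fa_mul y b)) x) (F c a)
                 + tensor_eval (\<lambda>x y. \<phi> (fa_neg y) (fa_mul a x)) (F c b)"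
    by (rule fus_dbracket_Leibniz[OF F skew Af(3,1,2)])
  also have "\<dots> = tensor_eval (\<lambda>x y. \<phi> (fa_neg (fa_mul x b)) (fa_neg y)) (F a c)
                 + tensor_eval (\<lambda>x y. \<phi> (fa_neg x) (fa_mul a (fa_neg y))) (F b c)"
    using fus_dbracket_skew[OF F bar_form_compose[OF skew bar_linear_id bar_linear_mul_right[OF car(2)]] Af(3,1)]
      fus_dbracket_skew[OF F bar_form_compose[OF skew bar_linear_mul_left[OF car(1)] bar_linear_id] Af(3,2)]
    by simp
  finally show ?thesis .
qed

lemma moment_identity_gen_span:
  assumes F: "fus_dbracket sm e F" and P: "P \<in> Af sm e" and E: "E \<in> fa_car"
    and gens: "\<And>k \<alpha>. gen_ok e k \<alpha> \<Longrightarrow> bar_teq sm e (F P (gen_el k \<alpha>)) (mom_rhs E P (gen_el k \<alpha>))"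
    and b: "b \<in> gen_span e"
  shows "bar_teq sm e (F P b) (mom_rhs E P b)"
  using b
proof (induction rule: gen_span.induct)
  case (gen k \<alpha>)
  then show ?case by (rule gens)
next
  case (add x y)
  note xy = add.hyps[THEN gen_span_Af] add.hyps[THEN gen_span_Af, THEN Af_carrier]
  show ?case
    unfolding bar_teq_iff
  proof (intro allI impI)
    fix \<phi> assume bf: "bar_form sm e \<phi>"
    show "tensor_eval \<phi> (F P (fa_add x y)) = tensor_eval \<phi> (mom_rhs E P (fa_add x y))"
      using add.IH bf xy
      by (simp add: fus_dbracket_add_right[OF F bf P] mom_rhs_add[OF bf E Af_carrier[OF P]] bar_teq_iff)
  qed
next
  case (sc x c)
  note x = sc.hyps[THEN gen_span_Af] sc.hyps[THEN gen_span_Af, THEN Af_carrier]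
  show ?case
    unfolding bar_teq_iff
  proof (intro allI impI)
    fix \<phi> assume bf: "bar_form sm e \<phi>"
    have "bar_form sm e (\<lambda>u v. \<phi> (fa_sc c u) v)"
      by (rule bar_form_compose[OF bf bar_linear_sc bar_linear_id])
    then show "tensor_eval \<phi> (F P (fa_sc c x)) = tensor_eval \<phi> (mom_rhs E P (fa_sc c x))"
      using sc.IH x
      by (simp add: fus_dbracket_sc_right[OF F bf P] mom_rhs_sc[OF bf E Af_carrier[OF P]] bar_teq_iff)
  qed
next
  case (mul x y)
  note xy = mul.hyps[THEN gen_span_Af] mul.hyps[THEN gen_span_Af, THEN Af_carrier]
  show ?case
    unfolding bar_teq_iff
  proof (intro allI impI)
    fix \<phi> assume bf: "bar_form sm e \<phi>"
    have "bar_form sm e (\<lambda>u v. \<phi> u (fa_mul v y))" "bar_form sm e (\<lambda>u v. \<phi> (fa_mul x u) v)"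
      using xy by (intro bar_form_compose[OF bf] bar_linear_id bar_linear_mul_left bar_linear_mul_right;
          simp)+
    then show "tensor_eval \<phi> (F P (fa_mul x y)) = tensor_eval \<phi> (mom_rhs E P (fa_mul x y))"
      using mul.IH xy
      by (simp add: fus_dbracket_Leibniz[OF F bf P] mom_rhs_Leibniz[OF bf E Af_carrier[OF P]] bar_teq_iff)
  qed
qed

lemma moment_identity_Af:
  assumes F: "fus_dbracket sm e F" and P: "P \<in> Af sm e" and E: "E \<in> fa_car"
    and gens: "\<And>k \<alpha>. gen_ok e k \<alpha> \<Longrightarrow> bar_teq sm e (F P (gen_el k \<alpha>)) (mom_rhs E P (gen_el k \<alpha>))"
    and a: "a \<in> Af sm e"
  shows "bar_teq sm e (F P a) (mom_rhs E P a)"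
  unfolding bar_teq_iff
proof (intro allI impI)
  fix \<phi> assume bf: "bar_form sm e \<phi>"
  obtain b where b: "b \<in> gen_span e" "bar_eq sm e a b"
    using Af_gen_span[OF a] by blast
  note b_Af = gen_span_Af[OF b(1)]
  have "tensor_eval \<phi> (F P a) = tensor_eval \<phi> (F P b)"
    by (rule fus_dbracket_cong[OF F bf P P a b_Af bar_eq_refl b(2)])
  also have "\<dots> = tensor_eval \<phi> (mom_rhs E P b)"
    using moment_identity_gen_span[OF F P E gens b(1)] bf by (simp add: bar_teq_iff)
  also have "\<dots> = tensor_eval \<phi> (mom_rhs E P a)"
    by (rule mom_rhs_cong[OF bf E Af_carrier[OF P] bar_eq_refl Af_carrier[OF P] bar_eq_sym[OF b(2)]
          Af_carrier[OF b_Af] Af_carrier[OF a]])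
  finally show "tensor_eval \<phi> (F P a) = tensor_eval \<phi> (mom_rhs E P a)" .
qed

lemma moment_identity_cong:
  assumes F: "fus_dbracket sm e F" and P: "P \<in> Af sm e" "P' \<in> Af sm e" "bar_eq sm e P P'"
    and E: "E \<in> fa_car" and a: "a \<in> Af sm e"
    and P': "bar_teq sm e (F P' a) (mom_rhs E P' a)"
  shows "bar_teq sm e (F P a) (mom_rhs E P a)"
  unfolding bar_teq_iff
proof (intro allI impI)
  fix \<phi> assume bf: "bar_form sm e \<phi>"
  have "tensor_eval \<phi> (F P a) = tensor_eval \<phi> (F P' a)"
    by (rule fus_dbracket_cong[OF F bf P(1,2) a a P(3) bar_eq_refl])
  also have "\<dots> = tensor_eval \<phi> (mom_rhs E P' a)"
    using P' bf by (simp add: bar_teq_iff)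
  also have "\<dots> = tensor_eval \<phi> (mom_rhs E P a)"
    by (rule mom_rhs_cong[OF bf E Af_carrier[OF P(2)] bar_eq_sym[OF P(3)] Af_carrier[OF P(1)]
          bar_eq_refl Af_carrier[OF a] Af_carrier[OF a]])
  finally show "tensor_eval \<phi> (F P a) = tensor_eval \<phi> (mom_rhs E P a)" .
qed

end

section \<open>The fused moment map\<close>

lemma bar_eq_G_add_sandwich:
  assumes "p \<in> fa_car" "q \<in> fa_car"
  shows "bar_eq sm e (fa_mul (fa_mul p (G (x + x'))) q)
           (fa_add (fa_mul (fa_mul p (G x)) q) (fa_mul (fa_mul p (G x')) q))"
  using bar_eq_sandwich[OF bar_eq_G_add[of sm e x x'] _ _ assms] by (simp add: fa_distrib_left fa_distrib_right)

lemma bar_eq_G_scale_sandwich: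
  assumes "p \<in> fa_car" "q \<in> fa_car"
  shows "bar_eq sm e (fa_mul (fa_mul p (G (sm c x))) q) (fa_sc c (fa_mul (fa_mul p (G x)) q))"
  using bar_eq_sandwich[OF bar_eq_G_scale[of sm e c x] _ _ assms] by (simp add: fa_mul_sc_left fa_mul_sc_right)

lemma bilin_form_G_sandwich:
  assumes bf: "bar_form sm e \<chi>" and car: "p \<in> fa_car" "q \<in> fa_car" "p' \<in> fa_car" "q' \<in> fa_car"
  shows "bilin_form sm (\<lambda>x y. \<chi> (fa_mul (fa_mul p (G x)) q) (fa_mul (fa_mul p' (G y)) q'))"
  unfolding bilin_form_def
  using bar_form_cong_left[OF bf bar_eq_G_add_sandwich] bar_form_cong_right[OF bf bar_eq_G_add_sandwich]
    bar_form_cong_left[OF bf bar_eq_G_scale_sandwich] bar_form_cong_right[OF bf bar_eq_G_scale_sandwich]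
    bar_form_add_left[OF bf] bar_form_add_right[OF bf] bar_form_sc_left[OF bf] bar_form_sc_right[OF bf]
  by (simp add: car)

locale quasi_hamiltonian_fusion =
  fixes sm :: "'k::field_char_0 \<Rightarrow> 'a::ring_1 \<Rightarrow> 'a" and e :: "nat \<Rightarrow> 'a" and N :: nat
    and br :: "'a \<Rightarrow> 'a \<Rightarrow> ('a \<times> 'a) list" and \<Phi> :: "nat \<Rightarrow> 'a"
    and F :: "('k, 'a) fel \<Rightarrow> ('k, 'a) fel \<Rightarrow> (('k, 'a) fel \<times> ('k, 'a) fel) list"
  assumes two_le_N: "N \<ge> 2"
    and base: "base_ok sm e N"
    and qh: "quasi_hamiltonian sm e N br \<Phi>"
    and fus: "fus_dbracket sm e F"
    and fus_gen: "\<forall>k1 \<alpha> k2 \<beta>. gen_ok e k1 \<alpha> \<and> gen_ok e k2 \<beta> \<longrightarrow>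
           bar_teq sm e (F (gen_el k1 \<alpha>) (gen_el k2 \<beta>)) (ind_br br k1 \<alpha> k2 \<beta> @ fus_br e k1 \<alpha> k2 \<beta>)"
begin

lemma e_idem: "s \<in> {1..N} \<Longrightarrow> e s * e s = e s"
  and e_orth: "s \<in> {1..N} \<Longrightarrow> t \<in> {1..N} \<Longrightarrow> s \<noteq> t \<Longrightarrow> e s * e t = 0"
  using base unfolding base_ok_def by blast+

lemma one_two_in_range: "1 \<in> {1..N}" "2 \<in> {1..N}"
  using two_le_N by auto

end

sublocale quasi_hamiltonian_fusion \<subseteq> fusion_idempotents e
  using e_idem[OF one_two_in_range(1)] e_idem[OF one_two_in_range(2)]
    e_orth[OF one_two_in_range] e_orth[OF one_two_in_range(2,1)]
  by unfold_locales simp_all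

context quasi_hamiltonian_fusion
begin

lemma Phi_sandwich: "s \<in> {1..N} \<Longrightarrow> \<Phi> s = e s * \<Phi> s * e s"
  using qh unfolding quasi_hamiltonian_def by blast

lemma Phi_absorb:
  assumes "s \<in> {1..N}"
  shows "e s * \<Phi> s = \<Phi> s" "\<Phi> s * e s = \<Phi> s" "e s * (\<Phi> s * x) = \<Phi> s * x" "\<Phi> s * (e s * x) = \<Phi> s * x"
proof -
  show left: "e s * \<Phi> s = \<Phi> s"
    by (rule sandwich_left_absorb[OF Phi_sandwich[OF assms] e_idem[OF assms]])
  show right: "\<Phi> s * e s = \<Phi> s"
    by (rule sandwich_right_absorb[OF Phi_sandwich[OF assms] e_idem[OF assms]])
  show "e s * (\<Phi> s * x) = \<Phi> s * x" "\<Phi> s * (e s * x) = \<Phi> s * x"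
    using mult_eq_imp_assoc[OF left] mult_eq_imp_assoc[OF right] .
qed

lemma Phi_orth:
  assumes "s \<in> {1..N}" "t \<in> {1..N}" "t \<noteq> s"
  shows "e t * \<Phi> s = 0" "\<Phi> s * e t = 0" "e t * (\<Phi> s * x) = 0" "\<Phi> s * (e t * x) = 0"
proof -
  show left: "e t * \<Phi> s = 0"
    by (rule sandwich_left_zero[OF Phi_sandwich[OF assms(1)] e_orth[OF assms(2,1,3)]])
  show right: "\<Phi> s * e t = 0"
    by (rule sandwich_right_zero[OF Phi_sandwich[OF assms(1)] e_orth[OF assms(1,2) assms(3)[symmetric]]])
  show "e t * (\<Phi> s * x) = 0" "\<Phi> s * (e t * x) = 0"
    using mult_eq_imp_assoc[OF left] mult_eq_imp_assoc[OF right] by simp_all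
qed

lemma gen_ok_Phi: "s \<in> {1..N} \<Longrightarrow> s \<noteq> 2 \<Longrightarrow> gen_ok e KT (\<Phi> s)"
  using Phi_orth[OF _ one_two_in_range(2)] unfolding gen_ok_def epsA_def
  by (simp add: ring_distribs mult.assoc)

lemma gen_ok_Phi2: "gen_ok e KW (\<Phi> 2)"
  unfolding gen_ok_def using Phi_sandwich[OF one_two_in_range(2)] by simp

lemma tensor_eval_F_gen:
  assumes "gen_ok e k1 \<alpha>" "gen_ok e k2 \<beta>" "bar_form sm e \<phi>"
  shows "tensor_eval \<phi> (F (gen_el k1 \<alpha>) (gen_el k2 \<beta>))
           = tensor_eval \<phi> (ind_br br k1 \<alpha> k2 \<beta>) + tensor_eval \<phi> (fus_br e k1 \<alpha> k2 \<beta>)"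
proof -
  have "bar_teq sm e (F (gen_el k1 \<alpha>) (gen_el k2 \<beta>)) (ind_br br k1 \<alpha> k2 \<beta> @ fus_br e k1 \<alpha> k2 \<beta>)"
    using fus_gen assms(1,2) by blast
  from bar_teqD[OF this assms(3)] show ?thesis
    by simp
qed

lemma tensor_eval_ind_br_Phi:
  assumes bf: "bar_form sm e \<chi>" and s: "s \<in> {1..N}"
  shows "tensor_eval \<chi> (ind_br br k1 (\<Phi> s) k2 \<beta>) =
    1/2 * \<chi> (fa_mul (fa_mul (eplus k2) (G (\<beta> * e s))) (eminus k1)) (fa_mul (fa_mul (eplus k1) (G (\<Phi> s))) (eminus k2))
  - 1/2 * \<chi> (fa_mul (fa_mul (eplus k2) (G (e s))) (eminus k1)) (fa_mul (fa_mul (eplus k1) (G (\<Phi> s * \<beta>))) (eminus k2))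
  + 1/2 * \<chi> (fa_mul (fa_mul (eplus k2) (G (\<beta> * \<Phi> s))) (eminus k1)) (fa_mul (fa_mul (eplus k1) (G (e s))) (eminus k2))
  - 1/2 * \<chi> (fa_mul (fa_mul (eplus k2) (G (\<Phi> s))) (eminus k1)) (fa_mul (fa_mul (eplus k1) (G (e s * \<beta>))) (eminus k2))"
proof -
  define \<psi> where "\<psi> x y = \<chi> (fa_mul (fa_mul (eplus k2) (G x)) (eminus k1)) (fa_mul (fa_mul (eplus k1) (G y)) (eminus k2))"
    for x y
  have bl: "bilin_form sm \<psi>"
    unfolding \<psi>_def by (rule bilin_form_G_sandwich[OF bf]) simp_all
  have "tensor_eval \<chi> (ind_br br k1 (\<Phi> s) k2 \<beta>) = (\<Sum>(x, y)\<leftarrow>br (\<Phi> s) \<beta>. \<psi> x y)"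
    by (simp add: ind_br_def \<psi>_def tensor_eval_def comp_def split_def)
  also have "\<dots> = (\<Sum>(x, y)\<leftarrow>[(sm (1/2) (\<beta> * e s), \<Phi> s), (sm (-1/2) (e s), \<Phi> s * \<beta>),
            (sm (1/2) (\<beta> * \<Phi> s), e s), (sm (-1/2) (\<Phi> s), e s * \<beta>)]. \<psi> x y)"
    using qh s bl unfolding quasi_hamiltonian_def tens_eq_def by blast
  also have "\<dots> = 1/2 * \<psi> (\<beta> * e s) (\<Phi> s) - 1/2 * \<psi> (e s) (\<Phi> s * \<beta>)
                  + 1/2 * \<psi> (\<beta> * \<Phi> s) (e s) - 1/2 * \<psi> (\<Phi> s) (e s * \<beta>)"
    using bl unfolding bilin_form_def by simp
  finally show ?thesis
    unfolding \<psi>_def .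
qed

lemma e_outer:
  assumes "3 \<le> s" "s \<le> N"
  shows "e s * e s = e s" "e s * e 1 = 0" "e 1 * e s = 0" "e s * e 2 = 0" "e 2 * e s = 0"
    "e s * (e s * x) = e s * x" "e s * (e 1 * x) = 0" "e 1 * (e s * x) = 0"
    "e s * (e 2 * x) = 0" "e 2 * (e s * x) = 0"
proof -
  have s: "s \<in> {1..N}" "s \<noteq> 1" "s \<noteq> 2"
    using assms by auto
  show "e s * e s = e s" "e s * e 1 = 0" "e 1 * e s = 0" "e s * e 2 = 0" "e 2 * e s = 0"
    using e_idem[OF s(1)] e_orth[OF s(1) one_two_in_range(1)] e_orth[OF one_two_in_range(1) s(1)]
      e_orth[OF s(1) one_two_in_range(2)] e_orth[OF one_two_in_range(2) s(1)] s(2,3)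
    by auto
  then show "e s * (e s * x) = e s * x" "e s * (e 1 * x) = 0" "e 1 * (e s * x) = 0"
    "e s * (e 2 * x) = 0" "e 2 * (e s * x) = 0"
    by (simp_all add: mult.assoc[symmetric])
qed

lemma gen_ok_mult_idem:
  assumes "gen_ok e k \<beta>"
  shows "k = KT \<Longrightarrow> e 2 * \<beta> = 0 \<and> \<beta> * e 2 = 0 \<and> e 2 * (\<beta> * x) = 0 \<and> \<beta> * (e 2 * x) = 0"
    and "k = KU \<Longrightarrow> e 2 * \<beta> = \<beta> \<and> \<beta> * e 2 = 0 \<and> e 2 * (\<beta> * x) = \<beta> * x \<and> \<beta> * (e 2 * x) = 0
           \<and> e 1 * \<beta> = 0 \<and> e 1 * (\<beta> * x) = 0"
    and "k = KV \<Longrightarrow> e 2 * \<beta> = 0 \<and> \<beta> * e 2 = \<beta> \<and> e 2 * (\<beta> * x) = 0 \<and> \<beta> * (e 2 * x) = \<beta> * x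
           \<and> \<beta> * e 1 = 0 \<and> \<beta> * (e 1 * x) = 0"
    and "k = KW \<Longrightarrow> e 2 * \<beta> = \<beta> \<and> \<beta> * e 2 = \<beta> \<and> e 2 * (\<beta> * x) = \<beta> * x \<and> \<beta> * (e 2 * x) = \<beta> * x
           \<and> e 1 * \<beta> = 0 \<and> e 1 * (\<beta> * x) = 0 \<and> \<beta> * e 1 = 0 \<and> \<beta> * (e 1 * x) = 0"
proof -
  have left: "e 1 * \<beta> = 0" if "e 2 * \<beta> = \<beta>"
    by (metis that e1_e2 mult.assoc mult_zero_left)
  have right: "\<beta> * e 1 = 0" if "\<beta> * e 2 = \<beta>"
    by (metis that e2_e1 mult.assoc mult_zero_right)
  note e2 = gen_ok_mult_e2[OF assms]
  show "k = KT \<Longrightarrow> e 2 * \<beta> = 0 \<and> \<beta> * e 2 = 0 \<and> e 2 * (\<beta> * x) = 0 \<and> \<beta> * (e 2 * x) = 0"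
    using e2(1) by (auto simp: mult_eq_imp_assoc)
  show "k = KU \<Longrightarrow> e 2 * \<beta> = \<beta> \<and> \<beta> * e 2 = 0 \<and> e 2 * (\<beta> * x) = \<beta> * x \<and> \<beta> * (e 2 * x) = 0
           \<and> e 1 * \<beta> = 0 \<and> e 1 * (\<beta> * x) = 0"
    using e2(2) left by (auto simp: mult_eq_imp_assoc)
  show "k = KV \<Longrightarrow> e 2 * \<beta> = 0 \<and> \<beta> * e 2 = \<beta> \<and> e 2 * (\<beta> * x) = 0 \<and> \<beta> * (e 2 * x) = \<beta> * x
           \<and> \<beta> * e 1 = 0 \<and> \<beta> * (e 1 * x) = 0"
    using e2(3) right by (auto simp: mult_eq_imp_assoc)
  show "k = KW \<Longrightarrow> e 2 * \<beta> = \<beta> \<and> \<beta> * e 2 = \<beta> \<and> e 2 * (\<beta> * x) = \<beta> * x \<and> \<beta> * (e 2 * x) = \<beta> * x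
           \<and> e 1 * \<beta> = 0 \<and> e 1 * (\<beta> * x) = 0 \<and> \<beta> * e 1 = 0 \<and> \<beta> * (e 1 * x) = 0"
    using e2(4) left right by (auto simp: mult_eq_imp_assoc)
qed

lemmas G_e12_Idem = word_val_letters(5)[of e 1] word_val_letters(5)[of e 2]
  word_val_letters(5)[of e 1, simplified] word_val_letters(5)[of e 2, simplified]

lemma moment_identity_outer_gen:
  assumes s: "3 \<le> s" "s \<le> N" and g: "gen_ok e k \<beta>"
  shows "bar_teq sm e (F (gen_el KT (\<Phi> s)) (gen_el k \<beta>)) (mom_rhs (G (e s)) (gen_el KT (\<Phi> s)) (gen_el k \<beta>))"
  unfolding bar_teq_iff
proof (intro allI impI)
  fix \<phi> assume bf: "bar_form sm e \<phi>"
  have sN: "s \<in> {1..N}" and n: "(1::nat) \<noteq> s" "(2::nat) \<noteq> s"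
    using s by auto
  note Phi = Phi_orth[OF sN one_two_in_range(1) n(1)] Phi_orth[OF sN one_two_in_range(2) n(2)]
    Phi_absorb[OF sN] e_outer[OF s]
  have "tensor_eval \<phi> (F (gen_el KT (\<Phi> s)) (gen_el k \<beta>))
        = tensor_eval \<phi> (ind_br br KT (\<Phi> s) k \<beta>) + tensor_eval \<phi> (fus_br e KT (\<Phi> s) k \<beta>)"
    by (rule tensor_eval_F_gen[OF gen_ok_Phi[OF sN n(2)[symmetric]] g bf])
  also have "\<dots> = tensor_eval \<phi> (mom_rhs (G (e s)) (gen_el KT (\<Phi> s)) (gen_el k \<beta>))"
    unfolding tensor_eval_ind_br_Phi[OF bf sN] tensor_eval_mom_rhs[OF bf fa_car_G fa_car_gen_el fa_car_gen_el]
    using gen_ok_mult_idem[OF g]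
    apply (cases k)
    apply (simp_all add: fa_mul_sc_left fa_mul_sc_right fa_neg_eq_sc fa_sc_sc bar_form_sc_left[OF bf]
        bar_form_sc_right[OF bf] eplus_def eminus_def gen_el_def fus_br_def TrE1_def TrE2_def Let_def)
    apply (simp_all only: G_e12_Idem)
    apply (simp_all add: word_simps bar_form_word_val[OF bf] word_form_zero_left[OF bf]
        word_form_zero_right[OF bf] Phi Phi[simplified])
    done
  finally show "tensor_eval \<phi> (F (gen_el KT (\<Phi> s)) (gen_el k \<beta>))
      = tensor_eval \<phi> (mom_rhs (G (e s)) (gen_el KT (\<Phi> s)) (gen_el k \<beta>))" .
qed

lemma mult_Phi12_zero:
  "\<beta> * e 2 = 0 \<Longrightarrow> \<beta> * \<Phi> 2 = 0" "\<beta> * e 2 = 0 \<Longrightarrow> \<beta> * (\<Phi> 2 * x) = 0"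
  "e 2 * \<beta> = 0 \<Longrightarrow> \<Phi> 2 * \<beta> = 0" "e 2 * \<beta> = 0 \<Longrightarrow> \<Phi> 2 * (\<beta> * x) = 0"
  "\<beta> * e 2 = \<beta> \<Longrightarrow> \<beta> * \<Phi> 1 = 0" "\<beta> * e 2 = \<beta> \<Longrightarrow> \<beta> * (\<Phi> 1 * x) = 0"
  "e 2 * \<beta> = \<beta> \<Longrightarrow> \<Phi> 1 * \<beta> = 0" "e 2 * \<beta> = \<beta> \<Longrightarrow> \<Phi> 1 * (\<beta> * x) = 0"
proof -
  note absorb = Phi_absorb[OF one_two_in_range(2)]
    and orth = Phi_orth[OF one_two_in_range(1) one_two_in_range(2)]
  have right2: "\<beta> * \<Phi> 2 = 0" if "\<beta> * e 2 = 0"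
  proof -
    have "\<beta> * \<Phi> 2 = (\<beta> * e 2) * \<Phi> 2"
      by (simp add: mult.assoc absorb(1))
    with that show ?thesis by simp
  qed
  have left2: "\<Phi> 2 * \<beta> = 0" if "e 2 * \<beta> = 0"
  proof -
    have "\<Phi> 2 * \<beta> = \<Phi> 2 * (e 2 * \<beta>)"
      by (simp add: mult.assoc[symmetric] absorb(2))
    with that show ?thesis by simp
  qed
  have right1: "\<beta> * \<Phi> 1 = 0" if "\<beta> * e 2 = \<beta>"
  proof -
    have "\<beta> * \<Phi> 1 = \<beta> * (e 2 * \<Phi> 1)"
      by (subst that[symmetric]) (simp add: mult.assoc)
    with orth(1) show ?thesis by simp
  qed
  have left1: "\<Phi> 1 * \<beta> = 0" if "e 2 * \<beta> = \<beta>"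
  proof -
    have "\<Phi> 1 * \<beta> = (\<Phi> 1 * e 2) * \<beta>"
      by (subst that[symmetric]) (simp add: mult.assoc)
    with orth(2) show ?thesis by simp
  qed
  show "\<beta> * e 2 = 0 \<Longrightarrow> \<beta> * \<Phi> 2 = 0" "\<beta> * e 2 = 0 \<Longrightarrow> \<beta> * (\<Phi> 2 * x) = 0"
    "e 2 * \<beta> = 0 \<Longrightarrow> \<Phi> 2 * \<beta> = 0" "e 2 * \<beta> = 0 \<Longrightarrow> \<Phi> 2 * (\<beta> * x) = 0"
    "\<beta> * e 2 = \<beta> \<Longrightarrow> \<beta> * \<Phi> 1 = 0" "\<beta> * e 2 = \<beta> \<Longrightarrow> \<beta> * (\<Phi> 1 * x) = 0"
    "e 2 * \<beta> = \<beta> \<Longrightarrow> \<Phi> 1 * \<beta> = 0" "e 2 * \<beta> = \<beta> \<Longrightarrow> \<Phi> 1 * (\<beta> * x) = 0"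
    using right2 left2 right1 left1 by (simp_all add: mult.assoc[symmetric])
qed

lemma moment_identity_fused_gen:
  assumes g: "gen_ok e k \<beta>"
  defines "T \<equiv> gen_el KT (\<Phi> 1)" and "W \<equiv> gen_el KW (\<Phi> 2)"
  shows "bar_teq sm e (F (fa_mul T W) (gen_el k \<beta>)) (mom_rhs (G (e 1)) (fa_mul T W) (gen_el k \<beta>))"
  unfolding bar_teq_iff
proof (intro allI impI)
  fix \<phi> assume bf: "bar_form sm e \<phi>"
  have gT: "gen_ok e KT (\<Phi> 1)"
    using gen_ok_Phi[OF one_two_in_range(1)] by simp
  have Af: "T \<in> Af sm e" "W \<in> Af sm e" "gen_el k \<beta> \<in> Af sm e"
    unfolding T_def W_def using gen_el_in_Af gT gen_ok_Phi2 g by blast+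
  have car: "T \<in> fa_car" "W \<in> fa_car"
    by (simp_all add: T_def W_def)
  note Phi12 = Phi_orth[OF one_two_in_range] Phi_orth[OF one_two_in_range(2,1)]
    Phi_absorb[OF one_two_in_range(1)] Phi_absorb[OF one_two_in_range(2)]
  define \<chi>1 where "\<chi>1 = (\<lambda>x y. \<phi> (fa_neg (fa_mul x W)) (fa_neg y))"
  define \<chi>2 where "\<chi>2 = (\<lambda>x y. \<phi> (fa_neg x) (fa_mul T (fa_neg y)))"
  have bf_\<chi>: "bar_form sm e \<chi>1" "bar_form sm e \<chi>2"
    unfolding \<chi>1_def \<chi>2_def
    by (rule bar_form_compose[OF bf bar_linear_comp[OF bar_linear_neg bar_linear_mul_right[OF car(2)]]
          bar_linear_neg],
        rule bar_form_compose[OF bf bar_linear_neg bar_linear_comp[OF bar_linear_mul_left[OF car(1)]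
          bar_linear_neg]])
  have "tensor_eval \<phi> (F (fa_mul T W) (gen_el k \<beta>))
        = tensor_eval \<chi>1 (F T (gen_el k \<beta>)) + tensor_eval \<chi>2 (F W (gen_el k \<beta>))"
    unfolding \<chi>1_def \<chi>2_def by (rule fus_dbracket_Leibniz_left[OF fus bf Af])
  also have "\<dots> = tensor_eval \<chi>1 (ind_br br KT (\<Phi> 1) k \<beta>) + tensor_eval \<chi>1 (fus_br e KT (\<Phi> 1) k \<beta>)
                 + tensor_eval \<chi>2 (ind_br br KW (\<Phi> 2) k \<beta>) + tensor_eval \<chi>2 (fus_br e KW (\<Phi> 2) k \<beta>)"
    unfolding T_def W_def tensor_eval_F_gen[OF gT g bf_\<chi>(1)] tensor_eval_F_gen[OF gen_ok_Phi2 g bf_\<chi>(2)]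
    by (rule add.assoc[symmetric])
  also have "\<dots> = tensor_eval \<phi> (mom_rhs (G (e 1)) (fa_mul T W) (gen_el k \<beta>))"
    unfolding tensor_eval_ind_br_Phi[OF bf_\<chi>(1) one_two_in_range(1)]
      tensor_eval_ind_br_Phi[OF bf_\<chi>(2) one_two_in_range(2)]
      tensor_eval_mom_rhs[OF bf fa_car_G fa_car_mul[OF car] fa_car_gen_el]
    unfolding \<chi>1_def \<chi>2_def T_def W_def
    using gen_ok_mult_idem[OF g]
    apply (cases k)
    apply (simp_all add: fa_mul_sc_left fa_mul_sc_right fa_neg_eq_sc fa_sc_sc bar_form_sc_left[OF bf]
        bar_form_sc_right[OF bf] eplus_def eminus_def gen_el_def fus_br_def TrE1_def TrE2_def Let_def)
    apply (simp_all only: G_e12_Idem)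
    apply (simp_all add: word_simps bar_form_word_val[OF bf] word_form_zero_left[OF bf]
        word_form_zero_right[OF bf] Phi12 Phi12[simplified] mult_Phi12_zero mult_Phi12_zero[simplified])
    done
  finally show "tensor_eval \<phi> (F (fa_mul T W) (gen_el k \<beta>))
      = tensor_eval \<phi> (mom_rhs (G (e 1)) (fa_mul T W) (gen_el k \<beta>))" .
qed

lemma TrPhi_bar_eq:
  assumes "s \<in> {1..N}" "s \<noteq> 2"
  shows "bar_eq sm e (TrPhi e \<Phi> s) (gen_el KT (\<Phi> s))"
proof -
  have "bar_eq sm e (TrPhi e \<Phi> s) (word_val e ([Elt (epsA e)] @ [Elt (\<Phi> s)] @ [Elt (epsA e)]))"
    unfolding TrPhi_def using assms(2) bar_eq_sandwich_words[OF epsb_bar_eq epsb_bar_eq, where ys = "[Elt (\<Phi> s)]"]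
    by (simp add: word_val_letters(1)[symmetric])
  also have "bar_eq sm e \<dots> (word_val e [Elt (\<Phi> s)])"
    using Phi_orth[OF assms(1) one_two_in_range(2)] assms(2)
    by (intro bar_eq_by_normal_form) (simp_all add: word_simps)
  finally show ?thesis
    by (simp add: gen_el_word_val[of KT _ e])
qed

lemma moment_identity_TrPhi:
  assumes "3 \<le> s" "s \<le> N" "a \<in> Af sm e"
  shows "bar_teq sm e (F (TrPhi e \<Phi> s) a) (mom_rhs (G (e s)) (TrPhi e \<Phi> s) a)"
proof -
  have s: "s \<in> {1..N}" "s \<noteq> 2"
    using assms by auto
  have gen: "gen_el KT (\<Phi> s) \<in> Af sm e"
    using gen_el_in_Af[OF gen_ok_Phi[OF s]] .
  have "TrPhi e \<Phi> s \<in> Af sm e"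
    by (rule Af_bar_eq_closed[OF gen _ bar_eq_sym[OF TrPhi_bar_eq[OF s]]]) (simp add: TrPhi_def)
  moreover have "bar_teq sm e (F (gen_el KT (\<Phi> s)) a) (mom_rhs (G (e s)) (gen_el KT (\<Phi> s)) a)"
    using moment_identity_outer_gen[OF assms(1,2)] by (rule moment_identity_Af[OF fus gen fa_car_G _ assms(3)])
  ultimately show ?thesis
    by (rule moment_identity_cong[OF fus _ gen TrPhi_bar_eq[OF s] fa_car_G assms(3)])
qed

lemma moment_identity_Phif1:
  assumes "a \<in> Af sm e"
  shows "bar_teq sm e (F (Phif1 e \<Phi>) a) (mom_rhs (G (e 1)) (Phif1 e \<Phi>) a)"
proof -
  let ?P = "fa_mul (gen_el KT (\<Phi> 1)) (gen_el KW (\<Phi> 2))"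
  have s: "(1::nat) \<in> {1..N}" "(1::nat) \<noteq> 2"
    using one_two_in_range by auto
  have P: "?P \<in> Af sm e"
    using gen_el_in_Af[OF gen_ok_Phi[OF s]] gen_el_in_Af[OF gen_ok_Phi2] by (rule Af_mul)
  have W: "TrPhi e \<Phi> 2 = gen_el KW (\<Phi> 2)"
    by (simp add: TrPhi_def gen_el_def eplus_def eminus_def)
  have eq: "bar_eq sm e (Phif1 e \<Phi>) ?P"
    unfolding Phif1_def W by (rule bar_eq_mul[OF TrPhi_bar_eq[OF s] bar_eq_refl]) simp_all
  have "Phif1 e \<Phi> \<in> Af sm e"
    by (rule Af_bar_eq_closed[OF P _ bar_eq_sym[OF eq]]) (simp add: Phif1_def TrPhi_def)
  moreover have "bar_teq sm e (F ?P a) (mom_rhs (G (e 1)) ?P a)"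
    using moment_identity_fused_gen by (rule moment_identity_Af[OF fus P fa_car_G _ assms])
  ultimately show ?thesis
    by (rule moment_identity_cong[OF fus _ P eq fa_car_G assms])
qed

end

theorem lemma2p21:
  fixes sm :: "'k::field_char_0 \<Rightarrow> 'a::ring_1 \<Rightarrow> 'a" and e :: "nat \<Rightarrow> 'a" and N :: nat
    and br :: "'a \<Rightarrow> 'a \<Rightarrow> ('a \<times> 'a) list" and \<Phi> :: "nat \<Rightarrow> 'a"
    and F :: "('k, 'a) fel \<Rightarrow> ('k, 'a) fel \<Rightarrow> (('k, 'a) fel \<times> ('k, 'a) fel) list"
  assumes "N \<ge> 2"
    and "base_ok sm e N"
    and "quasi_hamiltonian sm e N br \<Phi>"
    and "fus_dbracket sm e F"
    and "\<forall>k1 \<alpha> k2 \<beta>. gen_ok e k1 \<alpha> \<and> gen_ok e k2 \<beta> \<longrightarrow>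
           bar_teq sm e (F (gen_el k1 \<alpha>) (gen_el k2 \<beta>)) (ind_br br k1 \<alpha> k2 \<beta> @ fus_br e k1 \<alpha> k2 \<beta>)"
  shows "(\<forall>s a. 3 \<le> s \<and> s \<le> N \<and> a \<in> Af sm e \<longrightarrow>
            bar_teq sm e (F (TrPhi e \<Phi> s) a) (mom_rhs (G (e s)) (TrPhi e \<Phi> s) a))
       \<and> (\<forall>a\<in>Af sm e. bar_teq sm e (F (Phif1 e \<Phi>) a) (mom_rhs (G (e 1)) (Phif1 e \<Phi>) a))"
proof -
  interpret quasi_hamiltonian_fusion sm e N br \<Phi> F
    using assms by unfold_locales
  show ?thesis
    using moment_identity_TrPhi moment_identity_Phif1 by blast
qed

end
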